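(* Let $\mathcal{M}$ be an ergodic (not necessarily reversible) Markov chain on a finite state space $\Omega$ with stationary distribution $\pi$, and let $\mathcal{M}'$ be another ergodic (not necessarily reversible) Markov chain on $\Omega$ with the same stationary distribution. Let $f$ be an $(\mathcal{M},\mathcal{M}')$-flow. Then for every $\varepsilon>0$ and $x\in\Omega$, $$\tau_x(\widetilde{\mathcal{M}},\varepsilon)\ \le\ 4A(f)\,\frac{\tau(\widetilde{\mathcal{M}'},\frac{1}{2e})^2}{(\frac12-\frac1{2e})^2}\ln\left(\frac{1}{\varepsilon^2\pi(x)}\right)$$ and $$\tau_x(\widetilde{\mathcal{M}},\varepsilon)\ \le\ 4A(f)\,\frac{\tau(\mathcal{M}',\frac{1}{2e})^2}{(\frac12-\frac1{2e})^2}\ln\left(\frac{1}{\varepsilon^2\pi(x)}\right).$$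
   Context: A (discrete-time) Markov chain on a finite state space $\Omega$ with transition matrix $P$ is ergodic if irreducible and aperiodic; it then has a unique stationary distribution $\pi>0$. Variation distance: $\|\theta_1-\theta_2\|=\frac12\sum_i|\theta_1(i)-\theta_2(i)|$. Discrete mixing time: $\tau_x(\mathcal{M},\varepsilon)=\min\{t>0 \text{ integer}: \|P^{t'}(x,\cdot)-\pi\|\le\varepsilon \ \forall t'\ge t\}$, $\tau(\mathcal{M},\varepsilon)=\max_x\tau_x(\mathcal{M},\varepsilon)$. Continuization $\widetilde{\mathcal{M}}$: with $Q=P-I$, time-$t$ transition matrix $\exp(Qt)$; $\tau_x(\widetilde{\mathcal{M}},\varepsilon)=\inf\{t>0: \|v_x\exp(Qt')-\pi\|\le\varepsilon \ \forall \text{ real } t'\ge t\}$ ($v_x$ the unit row vector at $x$), $\tau(\widetilde{\mathcal{M}},\varepsilon)=\max_x\tau_x(\widetilde{\mathcal{M}},\varepsilon)$. Flows: Let $\mathcal{M}$ have transition matrix $P$ and stationary distribution $\pi$, and $\mathcal{M}'$ have transition matrix $P'$ and stationary distribution $\pi'$. Let $E^*(\mathcal{M})=\{(x,y): P(x,y)>0\}$ (pairs not necessarily distinct), similarly $E^*(\mathcal{M}')$. For $(x,y)\in E^*(\mathcal{M}')$, $\mathcal{P}_{x,y}$ is the set of paths $\gamma=(x=x_0,\dots,x_k=y)$ with each $(x_i,x_{i+1})\in E^*(\mathcal{M})$ and each $(z,w)\in E^*(\mathcal{M})$ appearing at most twice as a consecutive pair on $\gamma$; $|\gamma|=k$. $\mathcal{P}=\bigcup_{(x,y)\in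 E^*(\mathcal{M}')}\mathcal{P}_{x,y}$. An $(\mathcal{M},\mathcal{M}')$-flow is $f:\mathcal{P}\to[0,1]$ with $\sum_{\gamma\in\mathcal{P}_{x,y}}f(\gamma)=\pi'(x)P'(x,y)$ for all $(x,y)\in E^*(\mathcal{M}')$. With $r((z,w),\gamma)$ the number of times $(z,w)$ appears on $\gamma$, $A_{z,w}(f)=\frac{1}{\pi(z)P(z,w)}\sum_{\gamma:(z,w)\in\gamma}r((z,w),\gamma)|\gamma|f(\gamma)$ and $A(f)=\max_{(z,w)\in E^*(\mathcal{M})}A_{z,w}(f)$. *)

theory Defs
  imports "HOL-Analysis.Analysis"
begin

type_synonym 'a mat = "'a \<Rightarrow> 'a \<Rightarrow> real"

definition mmult :: "('a::finite) mat \<Rightarrow> 'a mat \<Rightarrow> 'a mat" where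
  "mmult A B = (\<lambda>x y. \<Sum>z\<in>UNIV. A x z * B z y)"

definition mone :: "'a mat" where
  "mone = (\<lambda>x y. if x = y then 1 else 0)"

fun mpow :: "('a::finite) mat \<Rightarrow> nat \<Rightarrow> 'a mat" where
  "mpow A 0 = mone"
| "mpow A (Suc n) = mmult (mpow A n) A"

definition mexp :: "('a::finite) mat \<Rightarrow> real \<Rightarrow> 'a mat" where
  "mexp A t = (\<lambda>x y. \<Sum>k. t ^ k / fact k * mpow A k x y)"

definition stochastic :: "('a::finite) mat \<Rightarrow> bool" where
  "stochastic P \<longleftrightarrow> (\<forall>x y. 0 \<le> P x y) \<and> (\<forall>x. (\<Sum>y\<in>UNIV. P x y) = 1)"

definition irreducible :: "('a::finite) mat \<Rightarrow> bool" where
  "irreducible P \<longleftrightarrow> (\<forall>x y. \<exists>n. mpow P n x y > 0)"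

definition aperiodic :: "('a::finite) mat \<Rightarrow> bool" where
  "aperiodic P \<longleftrightarrow> (\<forall>x. Gcd {n::nat. n > 0 \<and> mpow P n x x > 0} = 1)"

definition ergodic :: "('a::finite) mat \<Rightarrow> bool" where
  "ergodic P \<longleftrightarrow> stochastic P \<and> irreducible P \<and> aperiodic P"

definition stationary :: "('a::finite) mat \<Rightarrow> ('a \<Rightarrow> real) \<Rightarrow> bool" where
  "stationary P \<pi> \<longleftrightarrow> (\<forall>x. 0 \<le> \<pi> x) \<and> (\<Sum>x\<in>UNIV. \<pi> x) = 1 \<and>
     (\<forall>y. (\<Sum>x\<in>UNIV. \<pi> x * P x y) = \<pi> y)"

definition var_dist :: "('a::finite \<Rightarrow> real) \<Rightarrow> ('a \<Rightarrow> real) \<Rightarrow> real" where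
  "var_dist \<theta>1 \<theta>2 = (1/2) * (\<Sum>i\<in>UNIV. \<bar>\<theta>1 i - \<theta>2 i\<bar>)"

definition mix_time_from :: "('a::finite) mat \<Rightarrow> ('a \<Rightarrow> real) \<Rightarrow> real \<Rightarrow> 'a \<Rightarrow> nat" where
  "mix_time_from P \<pi> \<epsilon> x =
     (LEAST t::nat. t > 0 \<and> (\<forall>t'\<ge>t. var_dist (mpow P t' x) \<pi> \<le> \<epsilon>))"

definition mix_time :: "('a::finite) mat \<Rightarrow> ('a \<Rightarrow> real) \<Rightarrow> real \<Rightarrow> nat" where
  "mix_time P \<pi> \<epsilon> = Max (range (mix_time_from P \<pi> \<epsilon>))"

text \<open>Continuization: Q = P - I, time-t transition matrix exp(Q t).
  Note that the row x of exp(Q t) is v_x exp(Q t).\<close>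
definition generator :: "('a::finite) mat \<Rightarrow> 'a mat" where
  "generator P = (\<lambda>x y. P x y - mone x y)"

definition cmix_time_from :: "('a::finite) mat \<Rightarrow> ('a \<Rightarrow> real) \<Rightarrow> real \<Rightarrow> 'a \<Rightarrow> real" where
  "cmix_time_from P \<pi> \<epsilon> x =
     Inf {t::real. t > 0 \<and> (\<forall>t'::real. t' \<ge> t \<longrightarrow>
            var_dist (mexp (generator P) t' x) \<pi> \<le> \<epsilon>)}"

definition cmix_time :: "('a::finite) mat \<Rightarrow> ('a \<Rightarrow> real) \<Rightarrow> real \<Rightarrow> real" where
  "cmix_time P \<pi> \<epsilon> = Max (range (cmix_time_from P \<pi> \<epsilon>))"

definition edges :: "('a::finite) mat \<Rightarrow> ('a \<times> 'a) set" where
  "edges P = {(x, y). P x y > 0}"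

definition path_edges :: "'a list \<Rightarrow> ('a \<times> 'a) list" where
  "path_edges \<gamma> = zip \<gamma> (tl \<gamma>)"

definition path_len :: "'a list \<Rightarrow> nat" where
  "path_len \<gamma> = length \<gamma> - 1"

definition occ :: "'a \<times> 'a \<Rightarrow> 'a list \<Rightarrow> nat" where
  "occ e \<gamma> = count_list (path_edges \<gamma>) e"

definition paths :: "('a::finite) mat \<Rightarrow> 'a \<Rightarrow> 'a \<Rightarrow> 'a list set" where
  "paths P x y = {\<gamma>. \<gamma> \<noteq> [] \<and> hd \<gamma> = x \<and> last \<gamma> = y \<and>
      set (path_edges \<gamma>) \<subseteq> edges P \<and> (\<forall>e\<in>edges P. occ e \<gamma> \<le> 2)}"

definition all_paths :: "('a::finite) mat \<Rightarrow> 'a mat \<Rightarrow> 'a list set" where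
  "all_paths P P' = (\<Union>(x, y)\<in>edges P'. paths P x y)"

definition is_flow :: "('a::finite) mat \<Rightarrow> 'a mat \<Rightarrow> ('a \<Rightarrow> real) \<Rightarrow> ('a list \<Rightarrow> real) \<Rightarrow> bool" where
  "is_flow P P' \<pi>' f \<longleftrightarrow>
     (\<forall>\<gamma>\<in>all_paths P P'. 0 \<le> f \<gamma> \<and> f \<gamma> \<le> 1) \<and>
     (\<forall>(x, y)\<in>edges P'. (\<Sum>\<gamma>\<in>paths P x y. f \<gamma>) = \<pi>' x * P' x y)"

definition congestion_edge ::
  "('a::finite) mat \<Rightarrow> 'a mat \<Rightarrow> ('a \<Rightarrow> real) \<Rightarrow> ('a list \<Rightarrow> real) \<Rightarrow> 'a \<Rightarrow> 'a \<Rightarrow> real" where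
  "congestion_edge P P' \<pi> f z w =
     (1 / (\<pi> z * P z w)) *
     (\<Sum>\<gamma>\<in>{\<gamma>\<in>all_paths P P'. (z, w) \<in> set (path_edges \<gamma>)}.
         real (occ (z, w) \<gamma>) * real (path_len \<gamma>) * f \<gamma>)"

definition congestion ::
  "('a::finite) mat \<Rightarrow> 'a mat \<Rightarrow> ('a \<Rightarrow> real) \<Rightarrow> ('a list \<Rightarrow> real) \<Rightarrow> real" where
  "congestion P P' \<pi> f = Max ((\<lambda>(z, w). congestion_edge P P' \<pi> f z w) ` edges P)"

end

theory Submission
  imports Defs
begin

text \<open>Cheeger's inequality turns the conductance \<open>\<Phi>\<close> of \<open>M'\<close> into the Poincare inequality
  \<open>\<Phi>\<^sup>2 Var(g) \<le> 8 E'(g)\<close>, and the flow transfers it to \<open>M\<close>: telescoping \<open>g x - g y\<close> along the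
  paths of the flow and applying Cauchy-Schwarz gives \<open>E'(g) \<le> A(f) E(g)\<close>. A Poincare constant
  \<open>c\<close> for \<open>M\<close> makes the chi-square distance from \<open>\<pi>\<close> of the continuized chain started at
  \<open>x\<close> decay like \<open>exp (-2 c t)\<close> from its initial value \<open>1/\<pi>(x) - 1\<close>, whence
  \<open>\<tau>\<^sub>x \<le> ln (1 / (\<epsilon>\<^sup>2 \<pi>(x))) / (2 c)\<close>. Finally, if \<open>M'\<close> (continuized or not) is
  \<open>1/(2e)\<close>-close to \<open>\<pi>\<close> from every state after time \<open>T\<close>, then at least the fraction
  \<open>1/2 - 1/(2e)\<close> of the mass of a set \<open>S\<close> with \<open>\<pi>(S) \<le> 1/2\<close> has left \<open>S\<close> by time
  \<open>T\<close>, while at most \<open>T Q(S, -S)\<close> can leave, so \<open>\<Phi> \<ge> (1/2 - 1/(2e)) / T\<close>.\<close>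

lemma mmult_mone_right [simp]: "mmult A mone = A"
  by (simp add: mmult_def mone_def fun_eq_iff if_distrib cong: if_cong)

lemma mmult_mone_left [simp]: "mmult mone A = A"
  by (simp add: mmult_def mone_def fun_eq_iff if_distrib[where f="\<lambda>c. c * _"] cong: if_cong)

lemma mmult_assoc: "mmult (mmult A B) C = mmult A (mmult B C)"
proof -
  have "(\<Sum>z\<in>UNIV. (\<Sum>w\<in>UNIV. A x w * B w z) * C z y) =
        (\<Sum>w\<in>UNIV. A x w * (\<Sum>z\<in>UNIV. B w z * C z y))" for x y
    by (simp add: sum_distrib_left sum_distrib_right mult.assoc) (rule sum.swap)
  then show ?thesis by (simp add: mmult_def fun_eq_iff)
qed

lemma mpow_add: "mpow A (m + n) = mmult (mpow A m) (mpow A n)"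
  by (induction n) (simp_all add: mmult_assoc)

lemma stochastic_mpow:
  assumes "stochastic P"
  shows "stochastic (mpow P n)"
proof (induction n)
  case 0
  then show ?case by (simp add: stochastic_def mone_def)
next
  case (Suc n)
  have "(\<Sum>y\<in>UNIV. mpow P (Suc n) x y) = (\<Sum>z\<in>UNIV. mpow P n x z * (\<Sum>y\<in>UNIV. P z y))" for x
    by (simp add: mmult_def sum_distrib_left) (rule sum.swap)
  with Suc assms show ?case
    by (auto simp: stochastic_def mmult_def intro!: sum_nonneg)
qed

lemma mpow_nonneg: "stochastic P \<Longrightarrow> 0 \<le> mpow P n x y"
  using stochastic_mpow[of P n] by (simp add: stochastic_def)

lemma mpow_row_sum: "stochastic P \<Longrightarrow> (\<Sum>y\<in>UNIV. mpow P n x y) = 1"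
  using stochastic_mpow[of P n] by (simp add: stochastic_def)

lemma stochastic_sum_le_one:
  assumes "stochastic P"
  shows "(\<Sum>y\<in>A. P z y) \<le> 1"
proof -
  have "(\<Sum>y\<in>A. P z y) \<le> (\<Sum>y\<in>UNIV. P z y)"
    using assms by (intro sum_mono2) (auto simp: stochastic_def)
  with assms show ?thesis
    by (simp add: stochastic_def)
qed

lemma stationary_mpow:
  assumes "stationary P \<pi>"
  shows "(\<Sum>x\<in>UNIV. \<pi> x * mpow P n x y) = \<pi> y"
proof (induction n arbitrary: y)
  case 0
  then show ?case by (simp add: mone_def if_distrib cong: if_cong)
next
  case (Suc n)
  have "(\<Sum>x\<in>UNIV. \<pi> x * mpow P (Suc n) x y) = (\<Sum>z\<in>UNIV. (\<Sum>x\<in>UNIV. \<pi> x * mpow P n x z) * P z y)"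
    by (simp add: mmult_def sum_distrib_left sum_distrib_right mult.assoc) (rule sum.swap)
  with Suc assms show ?case by (simp add: stationary_def)
qed

lemma stationary_le_one:
  assumes "stationary P \<pi>"
  shows "\<pi> x \<le> 1"
proof -
  have "\<pi> x \<le> (\<Sum>y\<in>UNIV. \<pi> y)"
    using assms by (intro member_le_sum) (auto simp: stationary_def)
  with assms show ?thesis by (simp add: stationary_def)
qed

lemma mpow_add_ge:
  assumes "stochastic P"
  shows "mpow P a x z * mpow P b z y \<le> mpow P (a + b) x y"
proof -
  have "mpow P a x z * mpow P b z y \<le> (\<Sum>w\<in>UNIV. mpow P a x w * mpow P b w y)"
    using mpow_nonneg[OF assms] by (intro member_le_sum) auto
  then show ?thesis by (simp add: mpow_add mmult_def)
qed

section \<open>The matrix exponential and the heat kernel\<close>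

abbreviation heat_kernel :: "('a::finite) mat \<Rightarrow> real \<Rightarrow> 'a mat" where
  "heat_kernel P t \<equiv> mexp (generator P) t"

lemma exp_sums_real: "(\<lambda>n. t ^ n / fact n) sums exp (t::real)"
  using exp_converges[of t] by (simp add: divide_inverse mult.commute)

lemma mexp_term_bound:
  assumes "stochastic P"
  shows "norm (t ^ k / fact k * mpow P k x y) \<le> \<bar>t\<bar> ^ k / fact k"
proof -
  have "\<bar>t\<bar> ^ k * mpow P k x y \<le> \<bar>t\<bar> ^ k"
    using stochastic_sum_le_one[OF stochastic_mpow[OF assms], where A="{y}" and z=x] mpow_nonneg[OF assms]
    by (intro mult_left_le) auto
  then show ?thesis
    using mpow_nonneg[OF assms, of k x y] by (simp add: abs_mult power_abs divide_right_mono)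
qed

lemma summable_norm_mexp_series:
  assumes "stochastic P"
  shows "summable (\<lambda>k. norm (t ^ k / fact k * mpow P k x y))"
proof (rule summable_comparison_test)
  show "summable (\<lambda>k. \<bar>t\<bar> ^ k / fact k)"
    using exp_sums_real[of "\<bar>t\<bar>"] by (simp add: sums_iff)
qed (use mexp_term_bound[OF assms] in auto)

lemma summable_mexp_series:
  assumes "stochastic P"
  shows "summable (\<lambda>k. t ^ k / fact k * mpow P k x y)"
  using summable_norm_cancel[OF summable_norm_mexp_series[OF assms]] .

lemma mexp_0: "mexp A 0 x y = mone x y"
proof -
  have "(\<lambda>k. (0::real) ^ k / fact k * mpow A k x y) = (\<lambda>k. if k = 0 then mpow A k x y else 0)"
    by (auto simp: fun_eq_iff)
  then show ?thesis
    using sums_single[of 0 "\<lambda>k. mpow A k x y"] by (simp add: mexp_def sums_iff)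
qed

lemma sum_binomial_Suc:
  fixes p :: "nat \<Rightarrow> real"
  shows "(\<Sum>i\<le>k. real (k choose i) * (-1) ^ i * (p (Suc (k - i)) - p (k - i))) =
         (\<Sum>i\<le>Suc k. real (Suc k choose i) * (-1) ^ i * p (Suc k - i))"
proof -
  have pascal: "(\<Sum>i\<le>Suc k. real (Suc k choose i) * (-1) ^ i * p (Suc k - i)) =
        (\<Sum>i\<le>Suc k. real (k choose i) * (-1) ^ i * p (Suc k - i)) +
        (\<Sum>i\<le>k. real (k choose i) * (-1) ^ Suc i * p (k - i))"
  proof -
    have "(\<Sum>i\<le>Suc k. real (Suc k choose i) * (-1) ^ i * p (Suc k - i)) =
          p (Suc k) + (\<Sum>i\<le>k. real (k choose Suc i) * (-1) ^ Suc i * p (k - i))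
                    + (\<Sum>i\<le>k. real (k choose i) * (-1) ^ Suc i * p (k - i))"
      by (subst sum.atMost_Suc_shift) (simp add: sum.distrib algebra_simps sum_subtractf sum_negf)
    also have "p (Suc k) + (\<Sum>i\<le>k. real (k choose Suc i) * (-1) ^ Suc i * p (k - i)) =
               (\<Sum>i\<le>Suc k. real (k choose i) * (-1) ^ i * p (Suc k - i))"
      by (simp only: sum.atMost_Suc_shift) simp
    finally show ?thesis .
  qed
  have "(\<Sum>i\<le>Suc k. real (k choose i) * (-1) ^ i * p (Suc k - i)) =
        (\<Sum>i\<le>k. real (k choose i) * (-1) ^ i * p (Suc (k - i)))"
    by (simp add: Suc_diff_le)
  with pascal show ?thesis
    by (simp add: algebra_simps sum_subtractf sum_negf)
qed

lemma mpow_generator: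
  "mpow (generator P) k x y = (\<Sum>i\<le>k. real (k choose i) * (-1) ^ i * mpow P (k - i) x y)"
proof (induction k arbitrary: y)
  case 0
  then show ?case by simp
next
  case (Suc k)
  have "mpow (generator P) (Suc k) x y =
        (\<Sum>z\<in>UNIV. mpow (generator P) k x z * P z y) - mpow (generator P) k x y"
    by (simp add: mmult_def generator_def right_diff_distrib sum_subtractf mone_def
        if_distrib[where f="\<lambda>c. _ * c"] cong: if_cong)
  also have "(\<Sum>z\<in>UNIV. mpow (generator P) k x z * P z y) =
      (\<Sum>i\<le>k. real (k choose i) * (-1) ^ i * mpow P (Suc (k - i)) x y)"
    by (simp add: Suc mmult_def sum_distrib_right sum_distrib_left mult.assoc) (rule sum.swap)
  also have "\<dots> - mpow (generator P) k x y =
      (\<Sum>i\<le>k. real (k choose i) * (-1) ^ i * (mpow P (Suc (k - i)) x y - mpow P (k - i) x y))"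
    by (simp add: Suc right_diff_distrib sum_subtractf)
  also have "\<dots> = (\<Sum>i\<le>Suc k. real (Suc k choose i) * (-1) ^ i * mpow P (Suc k - i) x y)"
    by (rule sum_binomial_Suc)
  finally show ?case .
qed

lemma binomial_exp_term:
  fixes t :: real
  assumes "i \<le> k"
  shows "t ^ k / fact k * real (k choose i) = t ^ i / fact i * (t ^ (k - i) / fact (k - i))"
proof -
  have "t ^ k = t ^ i * t ^ (k - i)"
    using assms by (simp flip: power_add)
  moreover have "real (k choose i) = fact k / (fact i * fact (k - i))"
    using assms by (rule binomial_fact)
  ultimately show ?thesis by simp
qed

text \<open>The heat kernel is the Poissonisation of the discrete chain: a Cauchy product of the
  series of \<open>exp (-t)\<close> and \<open>exp (t P)\<close>.\<close>

lemma heat_kernel_eq: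
  assumes "stochastic P"
  shows "heat_kernel P t x y = exp (-t) * mexp P t x y"
proof -
  define a where "a = (\<lambda>i::nat. (-t) ^ i / fact i)"
  define b where "b = (\<lambda>j::nat. t ^ j / fact j * mpow P j x y)"
  have sa: "summable (\<lambda>k. norm (a k))"
    using exp_sums_real[of "\<bar>t\<bar>"] by (simp add: a_def power_abs sums_iff)
  have sb: "summable (\<lambda>k. norm (b k))"
    unfolding b_def by (rule summable_norm_mexp_series[OF assms])
  have "(\<Sum>i\<le>k. a i * b (k - i)) = t ^ k / fact k * mpow (generator P) k x y" for k
  proof -
    have "t ^ k / fact k * (real (k choose i) * (-1) ^ i * mpow P (k - i) x y) = a i * b (k - i)"
      if "i \<le> k" for i
    proof -
      have "t ^ k / fact k * (real (k choose i) * (-1) ^ i * mpow P (k - i) x y) =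
            (t ^ k / fact k * real (k choose i)) * ((-1) ^ i * mpow P (k - i) x y)"
        by (simp only: mult.assoc)
      also have "\<dots> = t ^ i / fact i * (t ^ (k - i) / fact (k - i)) * ((-1) ^ i * mpow P (k - i) x y)"
        by (simp only: binomial_exp_term[OF that])
      also have "\<dots> = a i * b (k - i)"
        by (simp add: a_def b_def power_minus[of t i])
      finally show ?thesis .
    qed
    then show ?thesis
      by (simp add: mpow_generator sum_distrib_left)
  qed
  moreover have "suminf a = exp (-t)"
    using exp_sums_real[of "-t"] by (simp add: a_def sums_iff)
  ultimately have "(\<lambda>k. t ^ k / fact k * mpow (generator P) k x y) sums (exp (-t) * mexp P t x y)"
    using Cauchy_product_sums[OF sa sb] by (simp add: b_def mexp_def)
  then show ?thesis by (simp add: mexp_def sums_iff)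
qed

lemma mexp_row_sum:
  assumes "stochastic P"
  shows "(\<Sum>y\<in>UNIV. mexp P t x y) = exp t"
proof -
  have "(\<Sum>y\<in>UNIV. mexp P t x y) = (\<Sum>k. \<Sum>y\<in>UNIV. t ^ k / fact k * mpow P k x y)"
    unfolding mexp_def by (rule suminf_sum[symmetric]) (rule summable_mexp_series[OF assms])
  also have "\<dots> = (\<Sum>k. t ^ k / fact k)"
    by (simp only: mpow_row_sum[OF assms] flip: sum_distrib_left) simp
  also have "\<dots> = exp t"
    using exp_sums_real[of t] by (simp add: sums_iff)
  finally show ?thesis .
qed

lemma heat_kernel_row_sum:
  assumes "stochastic P"
  shows "(\<Sum>y\<in>UNIV. heat_kernel P t x y) = 1"
  by (simp add: heat_kernel_eq[OF assms] mexp_row_sum[OF assms] exp_minus flip: sum_distrib_left)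

lemma mexp_has_derivative:
  assumes "stochastic P"
  shows "((\<lambda>t. mexp P t x y) has_real_derivative (\<Sum>z\<in>UNIV. mexp P t x z * P z y)) (at t)"
proof -
  define c where "c = (\<lambda>n. mpow P n x y / fact n)"
  have "diffs c n * t ^ n = (\<Sum>z\<in>UNIV. t ^ n / fact n * mpow P n x z * P z y)" for n
  proof -
    have "diffs c n = mpow P (Suc n) x y / fact n"
      unfolding diffs_def c_def fact_Suc by (simp del: of_nat_Suc mpow.simps)
    then have "diffs c n * t ^ n = t ^ n / fact n * (\<Sum>z\<in>UNIV. mpow P n x z * P z y)"
      by (simp add: mmult_def)
    also have "\<dots> = (\<Sum>z\<in>UNIV. t ^ n / fact n * (mpow P n x z * P z y))"
      by (rule sum_distrib_left)
    finally show ?thesis by (simp only: mult.assoc)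
  qed
  then have "(\<Sum>n. diffs c n * t ^ n) = (\<Sum>z\<in>UNIV. \<Sum>n. t ^ n / fact n * mpow P n x z * P z y)"
    by (simp only:) (rule suminf_sum, intro summable_mult2 summable_mexp_series[OF assms])
  also have "\<dots> = (\<Sum>z\<in>UNIV. mexp P t x z * P z y)"
    by (simp only: mexp_def suminf_mult2[OF summable_mexp_series[OF assms]])
  finally have "((\<lambda>s. \<Sum>n. c n * s ^ n) has_real_derivative (\<Sum>z\<in>UNIV. mexp P t x z * P z y)) (at t)"
    using termdiffs_strong_converges_everywhere[of c t] summable_mexp_series[OF assms]
    by (simp add: c_def mult.commute)
  moreover have "(\<lambda>s. mexp P s x y) = (\<lambda>s. \<Sum>n. c n * s ^ n)"
    by (simp add: fun_eq_iff mexp_def c_def mult.commute)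
  ultimately show ?thesis by simp
qed

lemma heat_kernel_has_derivative:
  assumes "stochastic P"
  shows "((\<lambda>t. heat_kernel P t x y) has_real_derivative
           (\<Sum>z\<in>UNIV. heat_kernel P t x z * P z y) - heat_kernel P t x y) (at t)"
proof -
  have "((\<lambda>t. exp (-t) * mexp P t x y) has_real_derivative
          exp (-t) * (\<Sum>z\<in>UNIV. mexp P t x z * P z y) - exp (-t) * mexp P t x y) (at t)"
    by (auto intro!: derivative_eq_intros mexp_has_derivative[OF assms] simp: algebra_simps)
  then show ?thesis
    by (simp add: heat_kernel_eq[OF assms] sum_distrib_left mult.assoc)
qed

section \<open>Dirichlet form, Poincare inequality and decay of the heat kernel\<close>

definition dirichlet_form :: "('a::finite) mat \<Rightarrow> ('a \<Rightarrow> real) \<Rightarrow> ('a \<Rightarrow> real) \<Rightarrow> real" where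
  "dirichlet_form P \<pi> g = (1/2) * (\<Sum>x\<in>UNIV. \<Sum>y\<in>UNIV. \<pi> x * P x y * (g x - g y)\<^sup>2)"

definition variance :: "('a::finite \<Rightarrow> real) \<Rightarrow> ('a \<Rightarrow> real) \<Rightarrow> real" where
  "variance \<pi> g = (\<Sum>x\<in>UNIV. \<pi> x * (g x - (\<Sum>y\<in>UNIV. \<pi> y * g y))\<^sup>2)"

definition poincare :: "('a::finite) mat \<Rightarrow> ('a \<Rightarrow> real) \<Rightarrow> real \<Rightarrow> bool" where
  "poincare P \<pi> c \<longleftrightarrow> (\<forall>g. c * variance \<pi> g \<le> dirichlet_form P \<pi> g)"

definition chi_square :: "('a::finite \<Rightarrow> real) \<Rightarrow> ('a \<Rightarrow> real) \<Rightarrow> real" where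
  "chi_square \<mu> \<pi> = (\<Sum>y\<in>UNIV. (\<mu> y - \<pi> y)\<^sup>2 / \<pi> y)"

lemma dirichlet_form_nonneg:
  assumes "stochastic P" "stationary P \<pi>"
  shows "0 \<le> dirichlet_form P \<pi> g"
  using assms unfolding dirichlet_form_def stochastic_def stationary_def
  by (auto intro!: sum_nonneg mult_nonneg_nonneg)

lemma sum_stochastic_rows:
  assumes "stochastic P"
  shows "(\<Sum>x\<in>UNIV. \<Sum>y\<in>UNIV. \<pi> x * P x y * h x) = (\<Sum>x\<in>UNIV. \<pi> x * h x)"
proof -
  have "(\<Sum>y\<in>UNIV. \<pi> x * P x y * h x) = \<pi> x * h x * (\<Sum>y\<in>UNIV. P x y)" for x
    by (simp add: sum_distrib_left mult_ac)
  with assms show ?thesis by (simp add: stochastic_def)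
qed

lemma sum_stationary_columns:
  assumes "stationary P \<pi>"
  shows "(\<Sum>x\<in>UNIV. \<Sum>y\<in>UNIV. \<pi> x * P x y * h y) = (\<Sum>y\<in>UNIV. \<pi> y * h y)"
proof -
  have "(\<Sum>x\<in>UNIV. \<Sum>y\<in>UNIV. \<pi> x * P x y * h y) = (\<Sum>y\<in>UNIV. (\<Sum>x\<in>UNIV. \<pi> x * P x y) * h y)"
    by (subst sum.swap) (simp add: sum_distrib_right)
  with assms show ?thesis by (simp add: stationary_def)
qed

lemma dirichlet_form_eq:
  assumes "stochastic P" "stationary P \<pi>"
  shows "dirichlet_form P \<pi> h =
           (\<Sum>x\<in>UNIV. \<pi> x * (h x)\<^sup>2) - (\<Sum>x\<in>UNIV. \<Sum>y\<in>UNIV. \<pi> x * P x y * h x * h y)"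
proof -
  have "(\<Sum>x\<in>UNIV. \<Sum>y\<in>UNIV. \<pi> x * P x y * (h x - h y)\<^sup>2) =
        (\<Sum>x\<in>UNIV. \<Sum>y\<in>UNIV. \<pi> x * P x y * (h x)\<^sup>2) + (\<Sum>x\<in>UNIV. \<Sum>y\<in>UNIV. \<pi> x * P x y * (h y)\<^sup>2)
          - 2 * (\<Sum>x\<in>UNIV. \<Sum>y\<in>UNIV. \<pi> x * P x y * h x * h y)"
    by (simp add: power2_diff algebra_simps sum.distrib sum_subtractf sum_distrib_left)
  then show ?thesis
    by (simp add: dirichlet_form_def sum_stochastic_rows[OF assms(1)] sum_stationary_columns[OF assms(2)])
qed

text \<open>With \<open>h = \<mu> / \<pi>\<close> the left-hand side is half the derivative of the chi-square distance
  of \<open>\<mu>\<close> along the heat flow.\<close>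

lemma sum_drift_eq_neg_dirichlet_form:
  assumes "stochastic P" "stationary P \<pi>"
  shows "(\<Sum>y\<in>UNIV. (h y - 1) * ((\<Sum>z\<in>UNIV. \<pi> z * h z * P z y) - \<pi> y * h y)) =
           - dirichlet_form P \<pi> h"
proof -
  have "(\<Sum>y\<in>UNIV. h y * (\<Sum>z\<in>UNIV. \<pi> z * h z * P z y)) =
        (\<Sum>x\<in>UNIV. \<Sum>y\<in>UNIV. \<pi> x * P x y * h x * h y)"
    by (subst sum.swap) (simp add: sum_distrib_left mult_ac)
  moreover have "(\<Sum>y\<in>UNIV. \<Sum>z\<in>UNIV. \<pi> z * h z * P z y) = (\<Sum>z\<in>UNIV. \<pi> z * h z)"
    using sum_stochastic_rows[OF assms(1), of \<pi> h] by (subst sum.swap) (simp add: mult_ac)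
  moreover have "(h y - 1) * ((\<Sum>z\<in>UNIV. \<pi> z * h z * P z y) - \<pi> y * h y) =
        h y * (\<Sum>z\<in>UNIV. \<pi> z * h z * P z y) - \<pi> y * (h y)\<^sup>2 - (\<Sum>z\<in>UNIV. \<pi> z * h z * P z y)
          + \<pi> y * h y" for y
    by (simp add: algebra_simps power2_eq_square)
  ultimately show ?thesis
    by (simp add: sum.distrib sum_subtractf dirichlet_form_eq[OF assms])
qed

lemma chi_square_heat_kernel_has_derivative:
  assumes "stochastic P" "stationary P \<pi>" "\<And>y. 0 < \<pi> y"
  shows "((\<lambda>t. chi_square (heat_kernel P t x) \<pi>) has_real_derivative
           - 2 * dirichlet_form P \<pi> (\<lambda>y. heat_kernel P t x y / \<pi> y)) (at t)"
proof -
  define \<mu> where "\<mu> = heat_kernel P t x"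
  define h where "h = (\<lambda>y. \<mu> y / \<pi> y)"
  define D where "D = (\<lambda>y. (\<Sum>z\<in>UNIV. \<mu> z * P z y) - \<mu> y)"
  have "((\<lambda>t. (heat_kernel P t x y - \<pi> y)\<^sup>2 / \<pi> y) has_real_derivative
          2 * (\<mu> y - \<pi> y) * D y / \<pi> y) (at t)" for y
    unfolding \<mu>_def D_def using assms(3)[of y]
    by (auto intro!: derivative_eq_intros heat_kernel_has_derivative[OF assms(1)])
  then have "((\<lambda>t. chi_square (heat_kernel P t x) \<pi>) has_real_derivative
               (\<Sum>y\<in>UNIV. 2 * (\<mu> y - \<pi> y) * D y / \<pi> y)) (at t)"
    unfolding chi_square_def by (rule DERIV_sum)
  moreover have "2 * (\<mu> y - \<pi> y) * D y / \<pi> y =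
       2 * ((h y - 1) * ((\<Sum>z\<in>UNIV. \<pi> z * h z * P z y) - \<pi> y * h y))" for y
  proof -
    have "\<pi> z * h z = \<mu> z" for z
      using assms(3)[of z] by (simp add: h_def)
    then have "D y = (\<Sum>z\<in>UNIV. \<pi> z * h z * P z y) - \<pi> y * h y"
      by (simp add: D_def)
    moreover have "(\<mu> y - \<pi> y) / \<pi> y = h y - 1"
      using assms(3)[of y] by (simp add: h_def field_simps)
    ultimately show ?thesis
      by (metis times_divide_eq_left mult.commute mult.left_commute)
  qed
  ultimately have "((\<lambda>t. chi_square (heat_kernel P t x) \<pi>) has_real_derivative
      (\<Sum>y\<in>UNIV. 2 * ((h y - 1) * ((\<Sum>z\<in>UNIV. \<pi> z * h z * P z y) - \<pi> y * h y)))) (at t)"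
    by simp
  moreover have "(\<Sum>y\<in>UNIV. 2 * ((h y - 1) * ((\<Sum>z\<in>UNIV. \<pi> z * h z * P z y) - \<pi> y * h y))) =
      - 2 * dirichlet_form P \<pi> h"
    by (simp add: sum_drift_eq_neg_dirichlet_form[OF assms(1,2)] flip: sum_distrib_left)
  ultimately show ?thesis
    by (simp add: h_def \<mu>_def)
qed

lemma variance_density_eq_chi_square:
  assumes "(\<Sum>y\<in>UNIV. \<mu> y) = 1" "\<And>y. 0 < \<pi> y"
  shows "variance \<pi> (\<lambda>y. \<mu> y / \<pi> y) = chi_square \<mu> \<pi>"
proof -
  have "\<pi> y * (\<mu> y / \<pi> y) = \<mu> y" for y
    using assms(2)[of y] by simp
  then have "(\<Sum>y\<in>UNIV. \<pi> y * (\<mu> y / \<pi> y)) = 1"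
    using assms(1) by simp
  moreover have "\<pi> y * (\<mu> y / \<pi> y - 1)\<^sup>2 = (\<mu> y - \<pi> y)\<^sup>2 / \<pi> y" for y
    using assms(2)[of y] by (simp add: field_simps power2_eq_square)
  ultimately show ?thesis
    by (simp add: variance_def chi_square_def)
qed

lemma chi_square_point_mass:
  assumes "(\<Sum>y\<in>UNIV. \<pi> y) = 1" "\<And>y. 0 < \<pi> y"
  shows "chi_square (mone x) \<pi> = 1 / \<pi> x - 1"
proof -
  have "(mone x y - \<pi> y)\<^sup>2 / \<pi> y = (if x = y then 1 / \<pi> y - 2 else 0) + \<pi> y" for y
    using assms(2)[of y] by (simp add: mone_def field_simps power2_eq_square)
  then show ?thesis
    using assms(1) by (simp add: chi_square_def sum.distrib sum_subtractf mone_def)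
qed

lemma var_dist_le_chi_square:
  assumes "(\<Sum>y\<in>UNIV. \<pi> y) = 1" "\<And>y. 0 < \<pi> y"
  shows "var_dist \<mu> \<pi> \<le> 1/2 * sqrt (chi_square \<mu> \<pi>)"
proof -
  have split: "\<bar>\<mu> y - \<pi> y\<bar> = sqrt (\<pi> y) * (\<bar>\<mu> y - \<pi> y\<bar> / sqrt (\<pi> y))" for y
    using assms(2)[of y] by simp
  have "(\<Sum>y\<in>UNIV. \<bar>\<mu> y - \<pi> y\<bar>)\<^sup>2 \<le>
        (\<Sum>y\<in>UNIV. (sqrt (\<pi> y))\<^sup>2) * (\<Sum>y\<in>UNIV. (\<bar>\<mu> y - \<pi> y\<bar> / sqrt (\<pi> y))\<^sup>2)"
    by (subst split) (rule Cauchy_Schwarz_ineq_sum)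
  also have "\<dots> = chi_square \<mu> \<pi>"
    using assms by (simp add: chi_square_def power_divide less_imp_le)
  finally show ?thesis
    unfolding var_dist_def using real_le_rsqrt by auto
qed

lemma exp_decay_of_derivative_le:
  fixes \<phi> \<phi>' :: "real \<Rightarrow> real"
  assumes "\<And>s. (\<phi> has_real_derivative \<phi>' s) (at s)" "\<And>s. \<phi>' s \<le> - a * \<phi> s" "0 \<le> t"
  shows "\<phi> t \<le> exp (- a * t) * \<phi> 0"
proof -
  define \<Psi> where "\<Psi> = (\<lambda>s. exp (a * s) * \<phi> s)"
  have "(\<Psi> has_real_derivative exp (a * s) * (a * \<phi> s + \<phi>' s)) (at s)" for s
    unfolding \<Psi>_def by (auto intro!: derivative_eq_intros assms(1) simp: algebra_simps)
  moreover have "exp (a * s) * (a * \<phi> s + \<phi>' s) \<le> 0" for s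
    using assms(2)[of s] by (intro mult_nonneg_nonpos) auto
  ultimately have "\<Psi> t \<le> \<Psi> 0"
    using DERIV_nonpos_imp_nonincreasing[OF assms(3), of \<Psi>] by blast
  have "\<phi> t = exp (- a * t) * \<Psi> t"
    by (simp add: \<Psi>_def mult.assoc[symmetric] flip: exp_add)
  also have "\<dots> \<le> exp (- a * t) * \<Psi> 0"
    using \<open>\<Psi> t \<le> \<Psi> 0\<close> by (rule mult_left_mono) simp
  finally show ?thesis
    by (simp add: \<Psi>_def)
qed

lemma heat_kernel_var_dist_decay:
  assumes "stochastic P" "stationary P \<pi>" "\<And>y. 0 < \<pi> y" "poincare P \<pi> c" "0 \<le> t"
  shows "var_dist (heat_kernel P t x) \<pi> \<le> 1/2 * exp (- c * t) * sqrt (1 / \<pi> x - 1)"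
proof -
  have sum_\<pi>: "(\<Sum>y\<in>UNIV. \<pi> y) = 1"
    using assms(2) by (simp add: stationary_def)
  have "c * chi_square (heat_kernel P s x) \<pi> \<le> dirichlet_form P \<pi> (\<lambda>y. heat_kernel P s x y / \<pi> y)"
    for s
  proof -
    have "c * variance \<pi> (\<lambda>y. heat_kernel P s x y / \<pi> y) \<le>
          dirichlet_form P \<pi> (\<lambda>y. heat_kernel P s x y / \<pi> y)"
      using assms(4) by (simp add: poincare_def)
    then show ?thesis
      by (simp only: variance_density_eq_chi_square[OF heat_kernel_row_sum[OF assms(1)] assms(3)])
  qed
  then have "chi_square (heat_kernel P t x) \<pi> \<le> exp (- (2 * c) * t) * chi_square (heat_kernel P 0 x) \<pi>"
    by (intro exp_decay_of_derivative_le[OF chi_square_heat_kernel_has_derivative[OF assms(1-3)] _ assms(5)])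
      simp
  also have "heat_kernel P 0 x = mone x"
    by (simp add: mexp_0 fun_eq_iff)
  also have "exp (- (2 * c) * t) * chi_square (mone x) \<pi> = (exp (- c * t))\<^sup>2 * (1 / \<pi> x - 1)"
    by (simp add: chi_square_point_mass[OF sum_\<pi> assms(3)] power2_eq_square flip: exp_add)
  finally have "sqrt (chi_square (heat_kernel P t x) \<pi>) \<le> sqrt ((exp (- c * t))\<^sup>2 * (1 / \<pi> x - 1))"
    by (rule real_sqrt_le_mono)
  also have "\<dots> = exp (- c * t) * sqrt (1 / \<pi> x - 1)"
    by (simp add: real_sqrt_mult)
  finally have "sqrt (chi_square (heat_kernel P t x) \<pi>) \<le> exp (- c * t) * sqrt (1 / \<pi> x - 1)" .
  then show ?thesis
    using var_dist_le_chi_square[OF sum_\<pi> assms(3), of "heat_kernel P t x"] by simp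
qed

lemma heat_kernel_var_dist_le_of_poincare:
  assumes "stochastic P" "stationary P \<pi>" "\<And>y. 0 < \<pi> y" "poincare P \<pi> c" "0 < c" "0 < \<epsilon>"
    and "ln (1 / (\<epsilon>\<^sup>2 * \<pi> x)) / (2 * c) \<le> t" "0 \<le> t"
  shows "var_dist (heat_kernel P t x) \<pi> \<le> \<epsilon> / 2"
proof -
  define L where "L = ln (1 / (\<epsilon>\<^sup>2 * \<pi> x))"
  have \<epsilon>\<pi>: "0 < \<epsilon>\<^sup>2 * \<pi> x"
    using assms(3,6) by simp
  have "exp (- c * t) \<le> exp (- (L / 2))"
    using assms(5,7) by (simp add: L_def field_simps)
  moreover have "sqrt (1 / \<pi> x - 1) \<le> sqrt (1 / \<pi> x)"
    by simp
  moreover have "1 \<le> 1 / \<pi> x"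
    using stationary_le_one[OF assms(2), of x] assms(3)[of x] by simp
  ultimately have "var_dist (heat_kernel P t x) \<pi> \<le> 1/2 * exp (- (L / 2)) * sqrt (1 / \<pi> x)"
    by (intro order_trans[OF heat_kernel_var_dist_decay[OF assms(1-4,8)]] mult_mono) auto
  also have "exp (- (L / 2)) = sqrt (\<epsilon>\<^sup>2 * \<pi> x)"
  proof (rule real_sqrt_unique[symmetric])
    show "(exp (- (L / 2)))\<^sup>2 = \<epsilon>\<^sup>2 * \<pi> x"
      using \<epsilon>\<pi> assms(3)[of x] assms(6) by (simp add: L_def power2_eq_square ln_div flip: exp_add)
  qed simp
  also have "1/2 * sqrt (\<epsilon>\<^sup>2 * \<pi> x) * sqrt (1 / \<pi> x) = \<epsilon> / 2"
    using assms(3)[of x] assms(6) by (simp flip: real_sqrt_mult)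
  finally show ?thesis .
qed

lemma Inf_le_of_greater_mem:
  fixes X :: "real set"
  assumes "\<And>s. R < s \<Longrightarrow> s \<in> X" "bdd_below X"
  shows "Inf X \<le> R"
proof (rule field_le_epsilon)
  fix e :: real
  assume "0 < e"
  then show "Inf X \<le> R + e"
    using assms by (intro cInf_lower) auto
qed

lemma cmix_time_from_le_of_poincare:
  assumes "stochastic P" "stationary P \<pi>" "\<And>y. 0 < \<pi> y" "poincare P \<pi> c" "0 < c"
    and "0 < \<epsilon>" "\<epsilon> \<le> 1"
  shows "cmix_time_from P \<pi> \<epsilon> x \<le> ln (1 / (\<epsilon>\<^sup>2 * \<pi> x)) / (2 * c)"
  unfolding cmix_time_from_def
proof (rule Inf_le_of_greater_mem)
  have "\<epsilon>\<^sup>2 * \<pi> x \<le> 1"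
    using stationary_le_one[OF assms(2)] assms(3)[of x] assms(6,7)
    by (intro mult_le_one) (auto simp: power_le_one less_imp_le)
  then have "0 \<le> ln (1 / (\<epsilon>\<^sup>2 * \<pi> x)) / (2 * c)"
    using assms(3)[of x] assms(5,6) by simp
  then show "s \<in> {t. 0 < t \<and> (\<forall>t'\<ge>t. var_dist (heat_kernel P t' x) \<pi> \<le> \<epsilon>)}"
    if "ln (1 / (\<epsilon>\<^sup>2 * \<pi> x)) / (2 * c) < s" for s
  proof -
    have "var_dist (heat_kernel P t' x) \<pi> \<le> \<epsilon> / 2" if "s \<le> t'" for t'
      by (rule heat_kernel_var_dist_le_of_poincare[OF assms(1-6)])
        (use \<open>0 \<le> _\<close> \<open>_ < s\<close> \<open>s \<le> t'\<close> in linarith)+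
    with \<open>0 \<le> _\<close> \<open>_ < s\<close> assms(6) show ?thesis by fastforce
  qed
qed (auto intro: bdd_belowI[of _ 0])

section \<open>Conductance and Cheeger's inequality\<close>

definition ergodic_flow :: "('a::finite) mat \<Rightarrow> ('a \<Rightarrow> real) \<Rightarrow> 'a set \<Rightarrow> 'a set \<Rightarrow> real" where
  "ergodic_flow P \<pi> S T = (\<Sum>x\<in>S. \<Sum>y\<in>T. \<pi> x * P x y)"

definition conductance_ge :: "('a::finite) mat \<Rightarrow> ('a \<Rightarrow> real) \<Rightarrow> real \<Rightarrow> bool" where
  "conductance_ge P \<pi> \<Phi> \<longleftrightarrow>
     (\<forall>S. (\<Sum>x\<in>S. \<pi> x) \<le> 1/2 \<longrightarrow> \<Phi> * (\<Sum>x\<in>S. \<pi> x) \<le> ergodic_flow P \<pi> S (-S))"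

lemma sums_peel_bottom_level:
  fixes w p :: "'a::finite \<Rightarrow> real" and q :: "'a \<Rightarrow> 'a \<Rightarrow> real"
  assumes "\<And>x. 0 \<le> w x" "0 < m" "\<And>x. 0 < w x \<Longrightarrow> m \<le> w x"
  defines "S \<equiv> {x. 0 < w x}" and "w' \<equiv> \<lambda>x. max (w x - m) 0"
  shows "(\<Sum>x\<in>UNIV. p x * w x) = (\<Sum>x\<in>UNIV. p x * w' x) + m * (\<Sum>x\<in>S. p x)"
    and "(\<Sum>x\<in>UNIV. \<Sum>y\<in>UNIV. q x y * max (w x - w y) 0) =
           (\<Sum>x\<in>UNIV. \<Sum>y\<in>UNIV. q x y * max (w' x - w' y) 0) + m * (\<Sum>x\<in>S. \<Sum>y\<in>-S. q x y)"
proof -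
  have w_out: "w x = 0" if "x \<notin> S" for x
    using that assms(1)[of x] by (simp add: S_def)
  have w'_in: "w' x = w x - m" if "x \<in> S" for x
    using that assms(3)[of x] by (simp add: w'_def S_def)
  have w'_out: "w' x = 0" if "x \<notin> S" for x
    using w_out[OF that] assms(2) by (simp add: w'_def)
  have "(\<Sum>x\<in>UNIV. p x * w x) = (\<Sum>x\<in>UNIV. p x * w' x + m * (if x \<in> S then p x else 0))"
    by (intro sum.cong refl) (simp add: w'_in w'_out w_out algebra_simps)
  also have "\<dots> = (\<Sum>x\<in>UNIV. p x * w' x) + m * (\<Sum>x\<in>S. p x)"
    by (simp add: sum.distrib sum.If_cases flip: sum_distrib_left)
  finally show "(\<Sum>x\<in>UNIV. p x * w x) = (\<Sum>x\<in>UNIV. p x * w' x) + m * (\<Sum>x\<in>S. p x)" .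
  have m_le: "m \<le> w x" if "x \<in> S" for x
    using that assms(3) by (simp add: S_def)
  have "max (w x - w y) 0 = max (w' x - w' y) 0 + (if x \<in> S \<and> y \<notin> S then m else 0)" for x y
    using assms(2) m_le[of x] m_le[of y]
    by (cases "x \<in> S"; cases "y \<in> S") (simp_all add: w'_in w'_out w_out)
  then have "(\<Sum>x\<in>UNIV. \<Sum>y\<in>UNIV. q x y * max (w x - w y) 0) =
      (\<Sum>x\<in>UNIV. \<Sum>y\<in>UNIV. q x y * max (w' x - w' y) 0 + m * (if x \<in> S \<and> y \<notin> S then q x y else 0))"
    by (intro sum.cong refl) (simp add: distrib_left)
  also have "(\<Sum>y\<in>UNIV. if x \<in> S \<and> y \<notin> S then q x y else 0) = (if x \<in> S then \<Sum>y\<in>-S. q x y else 0)"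
    for x
    by (simp add: sum.If_cases Compl_eq_Diff_UNIV set_diff_eq)
  then have "(\<Sum>x\<in>UNIV. \<Sum>y\<in>UNIV. q x y * max (w' x - w' y) 0 + m * (if x \<in> S \<and> y \<notin> S then q x y else 0)) =
      (\<Sum>x\<in>UNIV. \<Sum>y\<in>UNIV. q x y * max (w' x - w' y) 0) + m * (\<Sum>x\<in>S. \<Sum>y\<in>-S. q x y)"
    by (simp add: sum.distrib sum.If_cases flip: sum_distrib_left)
  finally show "(\<Sum>x\<in>UNIV. \<Sum>y\<in>UNIV. q x y * max (w x - w y) 0) =
      (\<Sum>x\<in>UNIV. \<Sum>y\<in>UNIV. q x y * max (w' x - w' y) 0) + m * (\<Sum>x\<in>S. \<Sum>y\<in>-S. q x y)" .
qed

text \<open>A discrete co-area inequality, by induction on the size of the support of \<open>w\<close>: lowering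
  all positive values by the least one, \<open>m\<close>, removes \<open>m\<close> times the indicator of the support
  from \<open>w\<close>, and \<open>m\<close> times its boundary from the right-hand side.\<close>

lemma coarea_inequality:
  fixes w p :: "'a::finite \<Rightarrow> real" and q :: "'a \<Rightarrow> 'a \<Rightarrow> real"
  assumes "\<And>x. 0 \<le> w x"
    and "\<And>S. S \<subseteq> {x. 0 < w x} \<Longrightarrow> \<Phi> * (\<Sum>x\<in>S. p x) \<le> (\<Sum>x\<in>S. \<Sum>y\<in>-S. q x y)"
  shows "\<Phi> * (\<Sum>x\<in>UNIV. p x * w x) \<le> (\<Sum>x\<in>UNIV. \<Sum>y\<in>UNIV. q x y * max (w x - w y) 0)"
  using assms
proof (induction "card {x. 0 < w x}" arbitrary: w rule: less_induct)
  case less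
  define S where "S = {x. 0 < w x}"
  show ?case
  proof (cases "S = {}")
    case True
    then have "\<not> 0 < w x" for x
      by (auto simp: S_def)
    then have "w x = 0" for x
      using less.prems(1)[of x] by (meson not_less order.antisym)
    then show ?thesis
      by simp
  next
    case False
    define m where "m = Min (w ` S)"
    have "m \<in> w ` S"
      unfolding m_def using False by (intro Min_in) auto
    then obtain x\<^sub>0 where "x\<^sub>0 \<in> S" "w x\<^sub>0 = m"
      by blast
    then have "0 < m"
      by (simp add: S_def)
    have m_le: "m \<le> w x" if "0 < w x" for x
      unfolding m_def using that by (intro Min_le) (auto simp: S_def)
    define w' where "w' x = max (w x - m) 0" for x
    have "{x. 0 < w' x} \<subseteq> S" "x\<^sub>0 \<notin> {x. 0 < w' x}"
      using \<open>x\<^sub>0 \<in> S\<close> \<open>w x\<^sub>0 = m\<close> by (auto simp: w'_def S_def)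
    with \<open>x\<^sub>0 \<in> S\<close> have "card {x. 0 < w' x} < card S"
      by (intro psubset_card_mono) auto
    then have IH: "\<Phi> * (\<Sum>x\<in>UNIV. p x * w' x) \<le> (\<Sum>x\<in>UNIV. \<Sum>y\<in>UNIV. q x y * max (w' x - w' y) 0)"
      using less.prems(2) \<open>{x. 0 < w' x} \<subseteq> S\<close> by (intro less.hyps) (auto simp: S_def w'_def)
    note peel = sums_peel_bottom_level(1)[OF less.prems(1) \<open>0 < m\<close> m_le, where p=p, folded S_def w'_def]
      sums_peel_bottom_level(2)[OF less.prems(1) \<open>0 < m\<close> m_le, where q=q, folded S_def w'_def]
    have "\<Phi> * (\<Sum>x\<in>UNIV. p x * w x) = \<Phi> * (\<Sum>x\<in>UNIV. p x * w' x) + m * (\<Phi> * (\<Sum>x\<in>S. p x))"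
      by (simp add: peel(1) S_def distrib_left mult.left_commute)
    also have "\<dots> \<le> (\<Sum>x\<in>UNIV. \<Sum>y\<in>UNIV. q x y * max (w' x - w' y) 0) + m * (\<Sum>x\<in>S. \<Sum>y\<in>-S. q x y)"
      using IH less.prems(2)[of S] \<open>0 < m\<close> by (intro add_mono mult_left_mono) (auto simp: S_def)
    also have "\<dots> = (\<Sum>x\<in>UNIV. \<Sum>y\<in>UNIV. q x y * max (w x - w y) 0)"
      by (simp add: peel(2) S_def)
    finally show ?thesis .
  qed
qed

lemma Cauchy_Schwarz_ineq_double_sum:
  fixes a b :: "'a::finite \<Rightarrow> 'b::finite \<Rightarrow> real"
  shows "(\<Sum>x\<in>UNIV. \<Sum>y\<in>UNIV. a x y * b x y)\<^sup>2 \<le>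
           (\<Sum>x\<in>UNIV. \<Sum>y\<in>UNIV. (a x y)\<^sup>2) * (\<Sum>x\<in>UNIV. \<Sum>y\<in>UNIV. (b x y)\<^sup>2)"
  using Cauchy_Schwarz_ineq_sum[of "\<lambda>p. a (fst p) (snd p)" "\<lambda>p. b (fst p) (snd p)" "UNIV \<times> UNIV"]
  by (simp add: sum.cartesian_product split_def)

lemma sum_sq_add_le:
  assumes "stochastic P" "stationary P \<pi>"
  shows "(\<Sum>x\<in>UNIV. \<Sum>y\<in>UNIV. \<pi> x * P x y * (u x + u y)\<^sup>2) \<le> 4 * (\<Sum>x\<in>UNIV. \<pi> x * (u x)\<^sup>2)"
proof -
  have "\<pi> x * P x y * (u x + u y)\<^sup>2 \<le> 2 * (\<pi> x * P x y * (u x)\<^sup>2) + 2 * (\<pi> x * P x y * (u y)\<^sup>2)" for x y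
  proof -
    have "(u x + u y)\<^sup>2 \<le> 2 * (u x)\<^sup>2 + 2 * (u y)\<^sup>2"
      using sum_squares_ge_zero[of "u x - u y" 0] by (simp add: power2_eq_square algebra_simps)
    moreover have "0 \<le> \<pi> x * P x y"
      using assms by (simp add: stochastic_def stationary_def)
    ultimately have "\<pi> x * P x y * (u x + u y)\<^sup>2 \<le> \<pi> x * P x y * (2 * (u x)\<^sup>2 + 2 * (u y)\<^sup>2)"
      by (rule mult_left_mono)
    then show ?thesis
      by (simp add: algebra_simps)
  qed
  then have "(\<Sum>x\<in>UNIV. \<Sum>y\<in>UNIV. \<pi> x * P x y * (u x + u y)\<^sup>2) \<le>
             (\<Sum>x\<in>UNIV. \<Sum>y\<in>UNIV. 2 * (\<pi> x * P x y * (u x)\<^sup>2) + 2 * (\<pi> x * P x y * (u y)\<^sup>2))"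
    by (intro sum_mono)
  also have "\<dots> = 4 * (\<Sum>x\<in>UNIV. \<pi> x * (u x)\<^sup>2)"
    using sum_stochastic_rows[OF assms(1), of \<pi> "\<lambda>x. (u x)\<^sup>2"]
      sum_stationary_columns[OF assms(2), of "\<lambda>y. (u y)\<^sup>2"]
    by (simp add: sum.distrib flip: sum_distrib_left)
  finally show ?thesis .
qed

lemma sum_pos_part_sq_diff_le:
  assumes "stochastic P" "stationary P \<pi>" "\<And>x. 0 \<le> u x"
  shows "(\<Sum>x\<in>UNIV. \<Sum>y\<in>UNIV. \<pi> x * P x y * max ((u x)\<^sup>2 - (u y)\<^sup>2) 0)\<^sup>2 \<le>
           8 * dirichlet_form P \<pi> u * (\<Sum>x\<in>UNIV. \<pi> x * (u x)\<^sup>2)"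
proof -
  define q where "q = (\<lambda>x y. \<pi> x * P x y)"
  have q_nonneg: "0 \<le> q x y" for x y
    using assms(1,2) by (simp add: q_def stochastic_def stationary_def)
  define a where "a = (\<lambda>x y. sqrt (q x y) * \<bar>u x - u y\<bar>)"
  define b where "b = (\<lambda>x y. sqrt (q x y) * (u x + u y))"
  have "max ((u x)\<^sup>2 - (u y)\<^sup>2) 0 \<le> \<bar>u x - u y\<bar> * (u x + u y)" for x y
  proof -
    have "(u x)\<^sup>2 - (u y)\<^sup>2 = (u x - u y) * (u x + u y)"
      by (simp add: power2_eq_square algebra_simps)
    then show ?thesis
      using assms(3)[of x] assms(3)[of y] by (auto intro: mult_right_mono)
  qed
  then have "q x y * max ((u x)\<^sup>2 - (u y)\<^sup>2) 0 \<le> q x y * (\<bar>u x - u y\<bar> * (u x + u y))" for x y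
    by (rule mult_left_mono[OF _ q_nonneg])
  also have "q x y * (\<bar>u x - u y\<bar> * (u x + u y)) = a x y * b x y" for x y
  proof -
    have "sqrt (q x y) * sqrt (q x y) = q x y"
      using q_nonneg[of x y] by simp
    then show ?thesis
      by (simp add: a_def b_def)
  qed
  finally have "q x y * max ((u x)\<^sup>2 - (u y)\<^sup>2) 0 \<le> a x y * b x y" for x y .
  then have "(\<Sum>x\<in>UNIV. \<Sum>y\<in>UNIV. q x y * max ((u x)\<^sup>2 - (u y)\<^sup>2) 0)\<^sup>2 \<le>
             (\<Sum>x\<in>UNIV. \<Sum>y\<in>UNIV. a x y * b x y)\<^sup>2"
    using q_nonneg by (intro power_mono sum_mono sum_nonneg) auto
  also have "\<dots> \<le> (\<Sum>x\<in>UNIV. \<Sum>y\<in>UNIV. (a x y)\<^sup>2) * (\<Sum>x\<in>UNIV. \<Sum>y\<in>UNIV. (b x y)\<^sup>2)"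
    by (rule Cauchy_Schwarz_ineq_double_sum)
  also have "(\<Sum>x\<in>UNIV. \<Sum>y\<in>UNIV. (a x y)\<^sup>2) = 2 * dirichlet_form P \<pi> u"
    using q_nonneg by (simp add: a_def q_def dirichlet_form_def power_mult_distrib)
  also have "(\<Sum>x\<in>UNIV. \<Sum>y\<in>UNIV. (b x y)\<^sup>2) \<le> 4 * (\<Sum>x\<in>UNIV. \<pi> x * (u x)\<^sup>2)"
    using sum_sq_add_le[OF assms(1,2), of u] q_nonneg by (simp add: b_def q_def power_mult_distrib)
  finally show ?thesis
    using dirichlet_form_nonneg[OF assms(1,2), of u] by (simp add: q_def mult_left_mono)
qed

lemma cheeger_nonneg:
  assumes "stochastic P" "stationary P \<pi>" "conductance_ge P \<pi> \<Phi>" "0 \<le> \<Phi>"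
    and "\<And>x. 0 \<le> u x" "(\<Sum>x\<in>{x. 0 < u x}. \<pi> x) \<le> 1/2"
  shows "\<Phi>\<^sup>2 * (\<Sum>x\<in>UNIV. \<pi> x * (u x)\<^sup>2) \<le> 8 * dirichlet_form P \<pi> u"
proof -
  define U where "U = (\<Sum>x\<in>UNIV. \<pi> x * (u x)\<^sup>2)"
  have \<pi>_nonneg: "0 \<le> \<pi> x" for x
    using assms(2) by (simp add: stationary_def)
  then have U_nonneg: "0 \<le> U"
    by (auto simp: U_def intro!: sum_nonneg)
  have "\<Phi> * U \<le> (\<Sum>x\<in>UNIV. \<Sum>y\<in>UNIV. \<pi> x * P x y * max ((u x)\<^sup>2 - (u y)\<^sup>2) 0)"
    unfolding U_def
  proof (rule coarea_inequality)
    fix S :: "'a set"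
    assume "S \<subseteq> {x. 0 < (u x)\<^sup>2}"
    then have "S \<subseteq> {x. 0 < u x}"
      using assms(5) by (auto simp: less_le)
    then have "(\<Sum>x\<in>S. \<pi> x) \<le> 1/2"
      using assms(6) \<pi>_nonneg by (meson finite order_trans sum_mono2)
    then show "\<Phi> * (\<Sum>x\<in>S. \<pi> x) \<le> (\<Sum>x\<in>S. \<Sum>y\<in>- S. \<pi> x * P x y)"
      using assms(3) by (simp add: conductance_ge_def ergodic_flow_def)
  qed simp
  then have "(\<Phi> * U)\<^sup>2 \<le> (\<Sum>x\<in>UNIV. \<Sum>y\<in>UNIV. \<pi> x * P x y * max ((u x)\<^sup>2 - (u y)\<^sup>2) 0)\<^sup>2"
    using assms(4) U_nonneg by (intro power_mono) auto
  also have "\<dots> \<le> 8 * dirichlet_form P \<pi> u * U"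
    unfolding U_def by (rule sum_pos_part_sq_diff_le[OF assms(1,2,5)])
  finally have "\<Phi>\<^sup>2 * U * U \<le> 8 * dirichlet_form P \<pi> u * U"
    by (simp add: power2_eq_square mult_ac)
  then show ?thesis
    using U_nonneg dirichlet_form_nonneg[OF assms(1,2), of u]
    by (cases "U = 0") (simp_all add: U_def)
qed

lemma exists_median:
  fixes g \<pi> :: "'a::finite \<Rightarrow> real"
  assumes "\<And>x. 0 \<le> \<pi> x" "(\<Sum>x\<in>UNIV. \<pi> x) = 1"
  obtains m where "(\<Sum>x\<in>{x. m < g x}. \<pi> x) \<le> 1/2" "(\<Sum>x\<in>{x. g x < m}. \<pi> x) \<le> 1/2"
proof -
  have split: "(\<Sum>x\<in>{x. g x \<le> v}. \<pi> x) + (\<Sum>x\<in>{x. v < g x}. \<pi> x) = 1" for v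
  proof -
    have "{x. g x \<le> v} \<union> {x. v < g x} = UNIV" "{x. g x \<le> v} \<inter> {x. v < g x} = {}"
      by auto
    then show ?thesis
      using assms(2) sum.union_disjoint[of "{x. g x \<le> v}" "{x. v < g x}" \<pi>] by simp
  qed
  define A where "A = {v \<in> range g. 1/2 \<le> (\<Sum>x\<in>{x. g x \<le> v}. \<pi> x)}"
  have "Max (range g) \<in> A"
    using assms(2) by (simp add: A_def)
  then have "A \<noteq> {}"
    by auto
  have "finite A"
    by (simp add: A_def)
  define m where "m = Min A"
  have "m \<in> A"
    unfolding m_def using \<open>finite A\<close> \<open>A \<noteq> {}\<close> by (rule Min_in)
  then have "(\<Sum>x\<in>{x. m < g x}. \<pi> x) \<le> 1/2"
    using split[of m] by (simp add: A_def)
  moreover have "(\<Sum>x\<in>{x. g x < m}. \<pi> x) \<le> 1/2"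
  proof (cases "{x. g x < m} = {}")
    case False
    define v where "v = Max (g ` {x. g x < m})"
    have "v \<in> g ` {x. g x < m}"
      unfolding v_def using False by (intro Max_in) auto
    then have "v < m" "v \<in> range g"
      by auto
    have "{x. g x < m} = {x. g x \<le> v}"
      using \<open>v < m\<close> by (auto simp: v_def)
    moreover have "v \<notin> A"
      using \<open>v < m\<close> Min_le[OF \<open>finite A\<close>] by (force simp: m_def)
    ultimately show ?thesis
      using \<open>v \<in> range g\<close> by (simp add: A_def)
  qed simp
  ultimately show ?thesis
    using that by blast
qed

lemma variance_le_sum_sq_dev:
  assumes "(\<Sum>x\<in>UNIV. \<pi> x) = 1"
  shows "variance \<pi> g \<le> (\<Sum>x\<in>UNIV. \<pi> x * (g x - m)\<^sup>2)"
proof -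
  define \<mu> where "\<mu> = (\<Sum>y\<in>UNIV. \<pi> y * g y)"
  have "\<pi> x * (g x - m)\<^sup>2 =
        \<pi> x * (g x - \<mu>)\<^sup>2 + 2 * (\<mu> - m) * (\<pi> x * g x) - 2 * (\<mu> - m) * \<mu> * \<pi> x + (\<mu> - m)\<^sup>2 * \<pi> x"
    for x
    by (simp add: power2_eq_square algebra_simps)
  then have "(\<Sum>x\<in>UNIV. \<pi> x * (g x - m)\<^sup>2) = variance \<pi> g + (\<mu> - m)\<^sup>2"
    using assms by (simp add: sum.distrib sum_subtractf variance_def \<mu>_def flip: sum_distrib_left)
  then show ?thesis
    by simp
qed

lemma pos_part_sq_diff_add_neg_part_sq_diff_le:
  fixes a b m :: real
  shows "(max (a - m) 0 - max (b - m) 0)\<^sup>2 + (max (m - a) 0 - max (m - b) 0)\<^sup>2 \<le> (a - b)\<^sup>2"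
proof (cases "m \<le> a"; cases "m \<le> b")
  assume "m \<le> a" "\<not> m \<le> b"
  then have "0 \<le> (a - m) * (m - b)"
    by simp
  with \<open>m \<le> a\<close> \<open>\<not> m \<le> b\<close> show ?thesis
    by (simp add: max_def power2_eq_square algebra_simps)
next
  assume "\<not> m \<le> a" "m \<le> b"
  then have "0 \<le> (m - a) * (b - m)"
    by simp
  with \<open>\<not> m \<le> a\<close> \<open>m \<le> b\<close> show ?thesis
    by (simp add: max_def power2_eq_square algebra_simps)
qed (simp_all add: max_def power2_eq_square algebra_simps)

lemma dirichlet_form_pos_part_add_neg_part_le:
  assumes "stochastic P" "stationary P \<pi>"
  shows "dirichlet_form P \<pi> (\<lambda>x. max (g x - m) 0) + dirichlet_form P \<pi> (\<lambda>x. max (m - g x) 0) \<le>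
           dirichlet_form P \<pi> g"
proof -
  have "0 \<le> \<pi> x * P x y" for x y
    using assms by (simp add: stochastic_def stationary_def)
  then have "(\<Sum>x\<in>UNIV. \<Sum>y\<in>UNIV. \<pi> x * P x y *
               ((max (g x - m) 0 - max (g y - m) 0)\<^sup>2 + (max (m - g x) 0 - max (m - g y) 0)\<^sup>2)) \<le>
             (\<Sum>x\<in>UNIV. \<Sum>y\<in>UNIV. \<pi> x * P x y * (g x - g y)\<^sup>2)"
    by (intro sum_mono mult_left_mono pos_part_sq_diff_add_neg_part_sq_diff_le)
  then show ?thesis
    by (simp add: dirichlet_form_def distrib_left sum.distrib)
qed

text \<open>Cheeger's inequality: split \<open>g\<close> at a median into its positive and negative parts, each of
  which is supported on a set of measure at most \<open>1/2\<close>.\<close>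

lemma poincare_of_conductance_ge:
  assumes "stochastic P" "stationary P \<pi>" "conductance_ge P \<pi> \<Phi>" "0 \<le> \<Phi>"
  shows "poincare P \<pi> (\<Phi>\<^sup>2 / 8)"
  unfolding poincare_def
proof
  fix g :: "'a \<Rightarrow> real"
  have \<pi>_nonneg: "0 \<le> \<pi> x" for x
    using assms(2) by (simp add: stationary_def)
  have sum_\<pi>: "(\<Sum>x\<in>UNIV. \<pi> x) = 1"
    using assms(2) by (simp add: stationary_def)
  obtain m where m: "(\<Sum>x\<in>{x. m < g x}. \<pi> x) \<le> 1/2" "(\<Sum>x\<in>{x. g x < m}. \<pi> x) \<le> 1/2"
    using exists_median[OF \<pi>_nonneg sum_\<pi>, where g=g] by blast
  define u where "u = (\<lambda>x. max (g x - m) 0)"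
  define v where "v = (\<lambda>x. max (m - g x) 0)"
  have "{x. 0 < u x} = {x. m < g x}" "{x. 0 < v x} = {x. g x < m}"
    by (auto simp: u_def v_def)
  then have "\<Phi>\<^sup>2 * (\<Sum>x\<in>UNIV. \<pi> x * (u x)\<^sup>2) \<le> 8 * dirichlet_form P \<pi> u"
    and "\<Phi>\<^sup>2 * (\<Sum>x\<in>UNIV. \<pi> x * (v x)\<^sup>2) \<le> 8 * dirichlet_form P \<pi> v"
    using m by (intro cheeger_nonneg[OF assms], simp_all add: u_def v_def)+
  moreover have "variance \<pi> g \<le> (\<Sum>x\<in>UNIV. \<pi> x * (u x)\<^sup>2) + (\<Sum>x\<in>UNIV. \<pi> x * (v x)\<^sup>2)"
  proof -
    have "(g x - m)\<^sup>2 = (u x)\<^sup>2 + (v x)\<^sup>2" for x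
      by (simp add: u_def v_def max_def power2_eq_square algebra_simps)
    then show ?thesis
      using variance_le_sum_sq_dev[OF sum_\<pi>, of g m] by (simp add: algebra_simps sum.distrib)
  qed
  moreover have "dirichlet_form P \<pi> u + dirichlet_form P \<pi> v \<le> dirichlet_form P \<pi> g"
    unfolding u_def v_def by (rule dirichlet_form_pos_part_add_neg_part_le[OF assms(1,2)])
  ultimately have "\<Phi>\<^sup>2 * variance \<pi> g \<le> 8 * dirichlet_form P \<pi> g"
    using mult_left_mono[OF _ zero_le_power2[of \<Phi>]] by (smt (verit) distrib_left)
  then show "\<Phi>\<^sup>2 / 8 * variance \<pi> g \<le> dirichlet_form P \<pi> g"
    by simp
qed

section \<open>Comparison of Dirichlet forms along a flow\<close>

lemma sum_list_map_eq_sum_count_list: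
  fixes f :: "'a \<Rightarrow> real"
  assumes "finite X" "set xs \<subseteq> X"
  shows "sum_list (map f xs) = (\<Sum>x\<in>X. real (count_list xs x) * f x)"
  using assms(2)
proof (induction xs)
  case (Cons a xs)
  have "(\<Sum>x\<in>X. real (count_list (a # xs) x) * f x) =
        (\<Sum>x\<in>X. real (count_list xs x) * f x + (if a = x then f x else 0))"
    by (intro sum.cong) (auto simp: algebra_simps)
  with Cons assms(1) show ?case
    by (simp add: sum.distrib)
qed simp

lemma telescope_path_edges:
  fixes g :: "'a \<Rightarrow> real"
  assumes "\<gamma> \<noteq> []"
  shows "g (hd \<gamma>) - g (last \<gamma>) = sum_list (map (\<lambda>e. g (fst e) - g (snd e)) (path_edges \<gamma>))"
  using assms
proof (induction \<gamma> rule: induct_list012)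
  case (3 a b \<gamma>)
  then show ?case
    by (simp add: path_edges_def)
qed (simp_all add: path_edges_def)

lemma sq_sum_list_le:
  fixes h :: "'a \<Rightarrow> real"
  shows "(sum_list (map h xs))\<^sup>2 \<le> real (length xs) * sum_list (map (\<lambda>e. (h e)\<^sup>2) xs)"
  using Cauchy_Schwarz_ineq_sum[of "\<lambda>_. 1" "\<lambda>i. h (xs ! i)" "{0..<length xs}"]
  by (simp add: sum_list_sum_nth)

lemma sq_diff_le_path_sum:
  fixes g :: "'a::finite \<Rightarrow> real"
  assumes "\<gamma> \<in> paths P x y"
  shows "(g x - g y)\<^sup>2 \<le>
           real (path_len \<gamma>) * (\<Sum>e\<in>edges P. real (occ e \<gamma>) * (g (fst e) - g (snd e))\<^sup>2)"
proof -
  have "\<gamma> \<noteq> []" "hd \<gamma> = x" "last \<gamma> = y" "set (path_edges \<gamma>) \<subseteq> edges P"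
    using assms by (auto simp: paths_def)
  then have "(g x - g y)\<^sup>2 = (sum_list (map (\<lambda>e. g (fst e) - g (snd e)) (path_edges \<gamma>)))\<^sup>2"
    using telescope_path_edges[of \<gamma> g] by simp
  also have "\<dots> \<le> real (length (path_edges \<gamma>)) *
                   sum_list (map (\<lambda>e. (g (fst e) - g (snd e))\<^sup>2) (path_edges \<gamma>))"
    by (rule sq_sum_list_le)
  also have "sum_list (map (\<lambda>e. (g (fst e) - g (snd e))\<^sup>2) (path_edges \<gamma>)) =
      (\<Sum>e\<in>edges P. real (occ e \<gamma>) * (g (fst e) - g (snd e))\<^sup>2)"
    unfolding occ_def using \<open>set (path_edges \<gamma>) \<subseteq> edges P\<close>
    by (intro sum_list_map_eq_sum_count_list) simp_all
  finally show ?thesis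
    by (simp add: path_len_def path_edges_def)
qed

lemma finite_paths: "finite (paths P x y)"
proof (rule finite_subset)
  show "paths P x y \<subseteq> {xs. set xs \<subseteq> UNIV \<and> length xs \<le> 2 * card (edges P) + 1}"
  proof
    fix \<gamma>
    assume "\<gamma> \<in> paths P x y"
    then have sub: "set (path_edges \<gamma>) \<subseteq> edges P" and "\<forall>e\<in>edges P. occ e \<gamma> \<le> 2"
      by (auto simp: paths_def)
    then have "length (path_edges \<gamma>) \<le> (\<Sum>e\<in>edges P. 2)"
      unfolding sum_count_set[OF sub finite, symmetric] by (intro sum_mono) (simp add: occ_def)
    then show "\<gamma> \<in> {xs. set xs \<subseteq> UNIV \<and> length xs \<le> 2 * card (edges P) + 1}"
      by (simp add: path_edges_def)
  qed
qed (rule finite_lists_length_le, simp)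

lemma finite_all_paths: "finite (all_paths P P')"
  unfolding all_paths_def using finite_paths by auto

lemma sum_all_paths:
  "(\<Sum>(x, y)\<in>edges P'. \<Sum>\<gamma>\<in>paths P x y. F \<gamma>) = (\<Sum>\<gamma>\<in>all_paths P P'. F \<gamma>)"
proof -
  have "(\<Sum>\<gamma>\<in>(\<Union>e\<in>edges P'. paths P (fst e) (snd e)). F \<gamma>) =
        (\<Sum>e\<in>edges P'. \<Sum>\<gamma>\<in>paths P (fst e) (snd e). F \<gamma>)"
  proof (rule sum.UNION_disjoint)
    show "\<forall>e\<in>edges P'. \<forall>e'\<in>edges P'. e \<noteq> e' \<longrightarrow>
            paths P (fst e) (snd e) \<inter> paths P (fst e') (snd e') = {}"
      by (auto simp: paths_def prod_eq_iff)
  qed (simp_all add: finite_paths)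
  then show ?thesis
    by (simp add: all_paths_def split_def)
qed

lemma sum_pairs_eq_sum_edges:
  assumes "stochastic P"
  shows "(\<Sum>x\<in>UNIV. \<Sum>y\<in>UNIV. \<pi> x * P x y * h x y) =
           (\<Sum>e\<in>edges P. \<pi> (fst e) * P (fst e) (snd e) * h (fst e) (snd e))"
proof -
  have "(\<Sum>x\<in>UNIV. \<Sum>y\<in>UNIV. \<pi> x * P x y * h x y) =
        (\<Sum>e\<in>UNIV. \<pi> (fst e) * P (fst e) (snd e) * h (fst e) (snd e))"
    by (simp add: sum.cartesian_product split_def)
  also have "\<dots> = (\<Sum>e\<in>edges P. \<pi> (fst e) * P (fst e) (snd e) * h (fst e) (snd e))"
  proof (rule sum.mono_neutral_right)
    show "\<forall>e\<in>UNIV - edges P. \<pi> (fst e) * P (fst e) (snd e) * h (fst e) (snd e) = 0"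
      using assms by (auto simp: edges_def stochastic_def not_less intro: antisym)
  qed auto
  finally show ?thesis .
qed

lemma flow_load_le_congestion:
  assumes "\<And>y. 0 < \<pi> y" "(z, w) \<in> edges P"
  shows "(\<Sum>\<gamma>\<in>all_paths P P'. real (occ (z, w) \<gamma>) * real (path_len \<gamma>) * f \<gamma>) \<le>
           \<pi> z * P z w * congestion P P' \<pi> f"
proof -
  have pos: "0 < \<pi> z * P z w" and "\<pi> z \<noteq> 0" "P z w \<noteq> 0"
    using assms(1)[of z] assms(2) by (auto simp: edges_def)
  have "(\<Sum>\<gamma>\<in>all_paths P P'. real (occ (z, w) \<gamma>) * real (path_len \<gamma>) * f \<gamma>) =
        (\<Sum>\<gamma>\<in>{\<gamma>\<in>all_paths P P'. (z, w) \<in> set (path_edges \<gamma>)}.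
            real (occ (z, w) \<gamma>) * real (path_len \<gamma>) * f \<gamma>)"
    by (rule sum.mono_neutral_right) (auto simp: finite_all_paths occ_def count_list_0_iff)
  also have "\<dots> = \<pi> z * P z w * congestion_edge P P' \<pi> f z w"
    using \<open>\<pi> z \<noteq> 0\<close> \<open>P z w \<noteq> 0\<close> by (simp add: congestion_edge_def)
  also have "\<dots> \<le> \<pi> z * P z w * congestion P P' \<pi> f"
    using pos assms(2) unfolding congestion_def
    by (intro mult_left_mono Max_ge) force+
  finally show ?thesis .
qed

lemma dirichlet_form_le_congestion:
  fixes g :: "'a::finite \<Rightarrow> real"
  assumes "stochastic P" "stochastic P'" "\<And>y. 0 < \<pi> y" "is_flow P P' \<pi> f"
  shows "dirichlet_form P' \<pi> g \<le> congestion P P' \<pi> f * dirichlet_form P \<pi> g"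
proof -
  define d where "d = (\<lambda>e::'a \<times> 'a. (g (fst e) - g (snd e))\<^sup>2)"
  define B where "B = (\<lambda>\<gamma>. real (path_len \<gamma>) * (\<Sum>e\<in>edges P. real (occ e \<gamma>) * d e))"
  have f_nonneg: "0 \<le> f \<gamma>" if "\<gamma> \<in> paths P x y" "(x, y) \<in> edges P'" for \<gamma> x y
    using assms(4) that by (auto simp: is_flow_def all_paths_def)
  have "2 * dirichlet_form P' \<pi> g = (\<Sum>e\<in>edges P'. \<pi> (fst e) * P' (fst e) (snd e) * d e)"
    using sum_pairs_eq_sum_edges[OF assms(2), of \<pi> "\<lambda>x y. (g x - g y)\<^sup>2"]
    by (simp add: dirichlet_form_def d_def)
  also have "\<dots> = (\<Sum>(x, y)\<in>edges P'. (\<Sum>\<gamma>\<in>paths P x y. f \<gamma>) * d (x, y))"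
    using assms(4) by (intro sum.cong refl) (auto simp: is_flow_def)
  also have "\<dots> = (\<Sum>(x, y)\<in>edges P'. \<Sum>\<gamma>\<in>paths P x y. f \<gamma> * d (x, y))"
    by (simp add: sum_distrib_right split_def)
  also have "\<dots> \<le> (\<Sum>(x, y)\<in>edges P'. \<Sum>\<gamma>\<in>paths P x y. f \<gamma> * B \<gamma>)"
    using f_nonneg sq_diff_le_path_sum by (auto simp: B_def d_def intro!: sum_mono mult_left_mono)
  also have "\<dots> = (\<Sum>\<gamma>\<in>all_paths P P'. \<Sum>e\<in>edges P. d e * (real (occ e \<gamma>) * real (path_len \<gamma>) * f \<gamma>))"
    unfolding sum_all_paths B_def by (simp add: sum_distrib_left mult_ac)
  also have "\<dots> = (\<Sum>e\<in>edges P. d e * (\<Sum>\<gamma>\<in>all_paths P P'. real (occ e \<gamma>) * real (path_len \<gamma>) * f \<gamma>))"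
    by (subst sum.swap) (simp add: sum_distrib_left)
  also have "\<dots> \<le> (\<Sum>e\<in>edges P. d e * (\<pi> (fst e) * P (fst e) (snd e) * congestion P P' \<pi> f))"
    using flow_load_le_congestion[OF assms(3)]
    by (intro sum_mono mult_left_mono) (auto simp: d_def)
  also have "\<dots> = congestion P P' \<pi> f * (2 * dirichlet_form P \<pi> g)"
    using sum_pairs_eq_sum_edges[OF assms(1), of \<pi> "\<lambda>x y. (g x - g y)\<^sup>2"]
    by (simp add: dirichlet_form_def d_def sum_distrib_left mult_ac)
  finally show ?thesis
    by simp
qed

section \<open>Conductance of a chain that mixes\<close>

lemma sum_UNIV_split_Compl:
  fixes h :: "'a::finite \<Rightarrow> real"
  shows "(\<Sum>z\<in>UNIV. h z) = (\<Sum>z\<in>S. h z) + (\<Sum>z\<in>-S. h z)"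
  using sum.subset_diff[of S UNIV h] by (simp add: Compl_eq_Diff_UNIV)

lemma sum_restricted_mpow_le:
  assumes "stochastic P" "stationary P \<pi>"
  shows "(\<Sum>x\<in>S. \<pi> x * mpow P k x z) \<le> \<pi> z"
proof -
  have "(\<Sum>x\<in>S. \<pi> x * mpow P k x z) \<le> (\<Sum>x\<in>UNIV. \<pi> x * mpow P k x z)"
    using assms mpow_nonneg[OF assms(1)] by (intro sum_mono2) (auto simp: stationary_def)
  then show ?thesis
    by (simp add: stationary_mpow[OF assms(2)])
qed

text \<open>In each step at most \<open>Q(S, -S)\<close> leaves \<open>S\<close> for the chain started from \<open>\<pi>\<close> restricted
  to \<open>S\<close>, because the mass of that chain never exceeds \<open>\<pi>\<close> pointwise.\<close>

lemma mpow_escape_le: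
  assumes "stochastic P" "stationary P \<pi>"
  shows "(\<Sum>x\<in>S. \<pi> x * (\<Sum>y\<in>-S. mpow P k x y)) \<le> real k * ergodic_flow P \<pi> S (-S)"
proof (induction k)
  case 0
  have "(\<Sum>y\<in>-S. mone x y) = 0" if "x \<in> S" for x
    using that by (intro sum.neutral) (auto simp: mone_def)
  then show ?case
    by simp
next
  case (Suc k)
  have \<pi>_nonneg: "0 \<le> \<pi> x" for x
    using assms(2) by (simp add: stationary_def)
  have P_nonneg: "0 \<le> P x y" for x y
    using assms(1) by (simp add: stochastic_def)
  define a where "a = (\<lambda>z. \<Sum>x\<in>S. \<pi> x * mpow P k x z)"
  define b where "b = (\<lambda>z. \<Sum>y\<in>-S. P z y)"
  have "(\<Sum>x\<in>S. \<pi> x * (\<Sum>y\<in>-S. mpow P (Suc k) x y)) =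
        (\<Sum>x\<in>S. \<Sum>y\<in>-S. \<Sum>z\<in>UNIV. \<pi> x * mpow P k x z * P z y)"
    by (simp add: mmult_def sum_distrib_left mult.assoc)
  also have "\<dots> = (\<Sum>x\<in>S. \<Sum>z\<in>UNIV. \<Sum>y\<in>-S. \<pi> x * mpow P k x z * P z y)"
    by (intro sum.cong refl sum.swap)
  also have "\<dots> = (\<Sum>z\<in>UNIV. a z * b z)"
    unfolding a_def b_def sum_product by (rule sum.swap)
  also have "\<dots> = (\<Sum>z\<in>S. a z * b z) + (\<Sum>z\<in>-S. a z * b z)"
    by (rule sum_UNIV_split_Compl)
  also have "(\<Sum>z\<in>S. a z * b z) \<le> ergodic_flow P \<pi> S (-S)"
  proof -
    have "(\<Sum>z\<in>S. a z * b z) \<le> (\<Sum>z\<in>S. \<pi> z * b z)"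
      using P_nonneg sum_restricted_mpow_le[OF assms]
      by (intro sum_mono mult_right_mono) (auto simp: a_def b_def intro: sum_nonneg)
    then show ?thesis
      by (simp add: ergodic_flow_def b_def sum_distrib_left)
  qed
  also have "(\<Sum>z\<in>-S. a z * b z) \<le> real k * ergodic_flow P \<pi> S (-S)"
  proof -
    have "(\<Sum>z\<in>-S. a z * b z) \<le> (\<Sum>z\<in>-S. a z)"
      using \<pi>_nonneg mpow_nonneg[OF assms(1)] stochastic_sum_le_one[OF assms(1)]
      by (intro sum_mono mult_left_le) (auto simp: a_def b_def intro: sum_nonneg)
    also have "\<dots> = (\<Sum>x\<in>S. \<pi> x * (\<Sum>y\<in>-S. mpow P k x y))"
      unfolding a_def by (subst sum.swap) (simp add: sum_distrib_left)
    finally show ?thesis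
      using Suc by linarith
  qed
  finally show ?case
    by (simp add: algebra_simps)
qed

lemma exp_times_index_sums: "(\<lambda>k. (t::real) ^ k / fact k * real k) sums (t * exp t)"
proof -
  have "t * (t ^ n / fact n) = t ^ Suc n / fact (Suc n) * real (Suc n)" for n
    by (simp add: fact_Suc field_simps del: of_nat_Suc)
  then have "(\<lambda>n. t ^ Suc n / fact (Suc n) * real (Suc n)) sums (t * exp t)"
    using sums_mult[OF exp_sums_real, of t t] by simp
  then show ?thesis
    by (subst (asm) sums_Suc_iff) simp
qed

lemma heat_kernel_escape_le:
  assumes "stochastic P" "stationary P \<pi>" "0 \<le> t"
  shows "(\<Sum>x\<in>S. \<pi> x * (\<Sum>y\<in>-S. heat_kernel P t x y)) \<le> t * ergodic_flow P \<pi> S (-S)"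
proof -
  define q where "q = ergodic_flow P \<pi> S (-S)"
  have series: "(\<lambda>k. \<Sum>x\<in>S. \<pi> x * (\<Sum>y\<in>-S. t ^ k / fact k * mpow P k x y)) sums
          (\<Sum>x\<in>S. \<pi> x * (\<Sum>y\<in>-S. mexp P t x y))"
    unfolding mexp_def
    by (intro sums_sum sums_mult summable_sums summable_mexp_series[OF assms(1)])
  have bound_series: "(\<lambda>k. t ^ k / fact k * real k * q) sums (t * exp t * q)"
    by (rule sums_mult2[OF exp_times_index_sums])
  have termwise: "(\<Sum>x\<in>S. \<pi> x * (\<Sum>y\<in>-S. t ^ k / fact k * mpow P k x y)) \<le> t ^ k / fact k * real k * q"
    for k
  proof -
    have "(\<Sum>x\<in>S. \<pi> x * (\<Sum>y\<in>-S. t ^ k / fact k * mpow P k x y)) =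
          t ^ k / fact k * (\<Sum>x\<in>S. \<pi> x * (\<Sum>y\<in>-S. mpow P k x y))"
      by (simp add: sum_distrib_left mult_ac)
    also have "\<dots> \<le> t ^ k / fact k * (real k * q)"
      using mpow_escape_le[OF assms(1,2), where S=S and k=k] assms(3) unfolding q_def
      by (intro mult_left_mono) auto
    finally show ?thesis
      by (simp add: mult.assoc)
  qed
  have "(\<Sum>x\<in>S. \<pi> x * (\<Sum>y\<in>-S. mexp P t x y)) \<le> t * exp t * q"
    by (rule sums_le[OF termwise series bound_series])
  have "(\<Sum>x\<in>S. \<pi> x * (\<Sum>y\<in>-S. heat_kernel P t x y)) = exp (-t) * (\<Sum>x\<in>S. \<pi> x * (\<Sum>y\<in>-S. mexp P t x y))"
    by (simp add: heat_kernel_eq[OF assms(1)] sum_distrib_left mult_ac)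
  also have "\<dots> \<le> exp (-t) * (t * exp t * q)"
    using \<open>_ \<le> t * exp t * q\<close> by (rule mult_left_mono) simp
  also have "\<dots> = t * q"
    by (simp add: exp_minus field_simps)
  finally show ?thesis
    by (simp add: q_def)
qed

lemma sum_diff_le_var_dist:
  fixes \<mu> \<pi> :: "'a::finite \<Rightarrow> real"
  assumes "(\<Sum>y\<in>UNIV. \<mu> y) = 1" "(\<Sum>y\<in>UNIV. \<pi> y) = 1"
  shows "(\<Sum>y\<in>A. \<pi> y) - (\<Sum>y\<in>A. \<mu> y) \<le> var_dist \<mu> \<pi>"
proof -
  have "(\<Sum>y\<in>A. \<pi> y - \<mu> y) + (\<Sum>y\<in>-A. \<pi> y - \<mu> y) = 0"
    using sum_UNIV_split_Compl[of "\<lambda>y. \<pi> y - \<mu> y" A] assms by (simp add: sum_subtractf)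
  moreover have "(\<Sum>y\<in>A. \<pi> y - \<mu> y) \<le> (\<Sum>y\<in>A. \<bar>\<mu> y - \<pi> y\<bar>)"
    by (intro sum_mono) auto
  moreover have "- (\<Sum>y\<in>-A. \<pi> y - \<mu> y) \<le> (\<Sum>y\<in>-A. \<bar>\<mu> y - \<pi> y\<bar>)"
    by (simp add: sum_negf[symmetric]) (intro sum_mono, auto)
  ultimately have "2 * (\<Sum>y\<in>A. \<pi> y - \<mu> y) \<le> (\<Sum>y\<in>UNIV. \<bar>\<mu> y - \<pi> y\<bar>)"
    using sum_UNIV_split_Compl[of "\<lambda>y. \<bar>\<mu> y - \<pi> y\<bar>" A] by linarith
  then show ?thesis
    by (simp add: var_dist_def sum_subtractf)
qed

text \<open>Being \<open>\<delta>\<close>-close to \<open>\<pi>\<close>, every row of \<open>K\<close> puts mass at least \<open>1/2 - \<delta>\<close> outside a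
  set \<open>S\<close> with \<open>\<pi>(S) \<le> 1/2\<close>.\<close>

lemma conductance_ge_of_mixing:
  assumes "stationary P \<pi>" "0 < T"
    and "\<And>x. (\<Sum>y\<in>UNIV. K x y) = 1" "\<And>x. var_dist (K x) \<pi> \<le> \<delta>"
    and "\<And>S. (\<Sum>x\<in>S. \<pi> x * (\<Sum>y\<in>-S. K x y)) \<le> T * ergodic_flow P \<pi> S (-S)"
  shows "conductance_ge P \<pi> ((1/2 - \<delta>) / T)"
  unfolding conductance_ge_def
proof (intro allI impI)
  fix S :: "'a set"
  assume half: "(\<Sum>x\<in>S. \<pi> x) \<le> 1/2"
  have \<pi>_nonneg: "0 \<le> \<pi> x" for x
    using assms(1) by (simp add: stationary_def)
  have sum_\<pi>: "(\<Sum>y\<in>UNIV. \<pi> y) = 1"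
    using assms(1) by (simp add: stationary_def)
  have "1/2 - \<delta> \<le> (\<Sum>y\<in>-S. K x y)" for x
    using sum_diff_le_var_dist[OF assms(3)[of x] sum_\<pi>, where A="-S"] assms(4)[of x] half
      sum_UNIV_split_Compl[of \<pi> S] sum_\<pi>
    by simp
  then have "(\<Sum>x\<in>S. \<pi> x * (1/2 - \<delta>)) \<le> (\<Sum>x\<in>S. \<pi> x * (\<Sum>y\<in>-S. K x y))"
    using \<pi>_nonneg by (intro sum_mono mult_left_mono) auto
  then have "(1/2 - \<delta>) * (\<Sum>x\<in>S. \<pi> x) \<le> (\<Sum>x\<in>S. \<pi> x * (\<Sum>y\<in>-S. K x y))"
    by (simp add: sum_distrib_right mult.commute)
  also have "\<dots> \<le> T * ergodic_flow P \<pi> S (-S)"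
    by (rule assms(5))
  finally show "(1/2 - \<delta>) / T * (\<Sum>x\<in>S. \<pi> x) \<le> ergodic_flow P \<pi> S (-S)"
    using assms(2) by (simp add: field_simps)
qed

section \<open>Existence of the mixing times\<close>

lemma stationary_pos:
  assumes "irreducible P" "stochastic P" "stationary P \<pi>"
  shows "0 < \<pi> y"
proof -
  have \<pi>_nonneg: "0 \<le> \<pi> x" for x
    using assms(3) by (simp add: stationary_def)
  have "\<exists>x. 0 < \<pi> x"
  proof (rule ccontr)
    assume "\<nexists>x. 0 < \<pi> x"
    then have "\<pi> x = 0" for x
      using \<pi>_nonneg[of x] by (metis not_less order.antisym)
    with assms(3) show False
      by (simp add: stationary_def)
  qed
  then obtain x where "0 < \<pi> x" ..
  moreover obtain n where "0 < mpow P n x y"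
    using assms(1) by (auto simp: irreducible_def)
  moreover have "\<pi> x * mpow P n x y \<le> (\<Sum>x\<in>UNIV. \<pi> x * mpow P n x y)"
    using \<pi>_nonneg mpow_nonneg[OF assms(2)] by (intro member_le_sum) auto
  ultimately show ?thesis
    by (simp add: stationary_mpow[OF assms(3)]) (meson less_le_trans mult_pos_pos)
qed

lemma ergodic_flow_pos:
  assumes "irreducible P" "stochastic P" "\<And>x. 0 < \<pi> x" "x \<in> S" "y \<notin> S"
  shows "0 < ergodic_flow P \<pi> S (-S)"
proof (rule ccontr)
  assume "\<not> 0 < ergodic_flow P \<pi> S (-S)"
  have nonneg: "0 \<le> \<pi> a * P a b" for a b
    using assms(2) assms(3)[of a] by (simp add: stochastic_def less_imp_le)
  then have "ergodic_flow P \<pi> S (-S) = 0"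
    using \<open>\<not> 0 < _\<close> by (simp add: ergodic_flow_def order.strict_iff_order sum_nonneg)
  then have "P a b = 0" if "a \<in> S" "b \<notin> S" for a b
    using that nonneg assms(3)[of a]
    by (simp add: ergodic_flow_def sum_nonneg_eq_0_iff sum_nonneg) (metis ComplI less_irrefl)
  then have "mpow P n a b = 0" if "a \<in> S" "b \<notin> S" for n a b
    using that
  proof (induction n arbitrary: b)
    case (Suc n)
    have "mpow P n a u * P u b = 0" for u
      using Suc by (cases "u \<in> S") auto
    then show ?case
      unfolding mpow.simps mmult_def by (intro sum.neutral) simp
  qed (auto simp: mone_def)
  then show False
    using assms(1,4,5) by (metis irreducible_def less_irrefl)
qed

lemma exists_conductance_ge:
  assumes "irreducible P" "stochastic P" "stationary P \<pi>"
  obtains \<Phi> where "0 < \<Phi>" "conductance_ge P \<pi> \<Phi>"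
proof -
  have pos: "0 < \<pi> x" for x
    by (rule stationary_pos[OF assms])
  define \<S> where "\<S> = {S. S \<noteq> {} \<and> (\<Sum>x\<in>S. \<pi> x) \<le> 1/2}"
  define \<Phi> where "\<Phi> = Min (insert 1 ((\<lambda>S. ergodic_flow P \<pi> S (-S) / (\<Sum>x\<in>S. \<pi> x)) ` \<S>))"
  have sum_\<pi>: "(\<Sum>x\<in>UNIV. \<pi> x) = 1"
    using assms(3) by (simp add: stationary_def)
  have "0 < ergodic_flow P \<pi> S (-S) / (\<Sum>x\<in>S. \<pi> x)" if "S \<in> \<S>" for S
  proof -
    have "S \<noteq> {}" "S \<noteq> UNIV"
      using that sum_\<pi> by (auto simp: \<S>_def)
    then obtain x y where "x \<in> S" "y \<notin> S"
      by blast
    then have "0 < ergodic_flow P \<pi> S (-S)"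
      by (intro ergodic_flow_pos[OF assms(1,2)] pos)
    moreover have "0 < (\<Sum>x\<in>S. \<pi> x)"
      using \<open>x \<in> S\<close> pos by (intro sum_pos) auto
    ultimately show ?thesis
      by simp
  qed
  then have "0 < \<Phi>"
    by (simp add: \<Phi>_def)
  moreover have "conductance_ge P \<pi> \<Phi>"
    unfolding conductance_ge_def
  proof (intro allI impI)
    fix S :: "'a set"
    assume "(\<Sum>x\<in>S. \<pi> x) \<le> 1/2"
    show "\<Phi> * (\<Sum>x\<in>S. \<pi> x) \<le> ergodic_flow P \<pi> S (-S)"
    proof (cases "S = {}")
      case False
      then have "S \<in> \<S>" and "0 < (\<Sum>x\<in>S. \<pi> x)"
        using \<open>_ \<le> 1/2\<close> pos by (auto simp: \<S>_def intro!: sum_pos)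
      then have "\<Phi> \<le> ergodic_flow P \<pi> S (-S) / (\<Sum>x\<in>S. \<pi> x)"
        by (simp add: \<Phi>_def)
      then show ?thesis
        using \<open>0 < (\<Sum>x\<in>S. \<pi> x)\<close> by (simp add: field_simps)
    qed (simp add: ergodic_flow_def)
  qed
  ultimately show ?thesis
    using that by blast
qed

lemma heat_kernel_eventually_close:
  assumes "irreducible P" "stochastic P" "stationary P \<pi>" "0 < \<delta>"
  shows "\<exists>T>0. \<forall>t\<ge>T. var_dist (heat_kernel P t x) \<pi> \<le> \<delta>"
proof -
  obtain \<Phi> where "0 < \<Phi>" "conductance_ge P \<pi> \<Phi>"
    using exists_conductance_ge[OF assms(1-3)] by blast
  then have "poincare P \<pi> (\<Phi>\<^sup>2 / 8)"
    by (intro poincare_of_conductance_ge[OF assms(2,3)]) simp_all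
  define T where "T = max 1 (ln (1 / (\<delta>\<^sup>2 * \<pi> x)) / (2 * (\<Phi>\<^sup>2 / 8)))"
  have "var_dist (heat_kernel P t x) \<pi> \<le> \<delta> / 2" if "T \<le> t" for t
    using that \<open>0 < \<Phi>\<close> assms(4)
    by (intro heat_kernel_var_dist_le_of_poincare[OF assms(2,3) stationary_pos[OF assms(1-3)]
          \<open>poincare P \<pi> _\<close>]) (auto simp: T_def)
  then have "var_dist (heat_kernel P t x) \<pi> \<le> \<delta>" if "T \<le> t" for t
    using that assms(4) by fastforce
  moreover have "0 < T"
    by (simp add: T_def)
  ultimately show ?thesis
    by blast
qed

lemma mult_mem_additive_set:
  fixes S :: "nat set"
  assumes "0 \<in> S" "\<And>a b. a \<in> S \<Longrightarrow> b \<in> S \<Longrightarrow> a + b \<in> S" "a \<in> S"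
  shows "k * a \<in> S"
  by (induction k) (simp_all add: assms)

text \<open>The least gap \<open>d\<close> between two elements of \<open>S\<close> divides every \<open>a \<in> S\<close>: by Bezout,
  suitable multiples of \<open>q + d\<close> and of \<open>q\<close>, \<open>a\<close> produce a gap of \<open>gcd d a\<close>.\<close>

lemma additive_set_consecutive:
  fixes S :: "nat set"
  assumes "0 \<in> S" "\<And>a b. a \<in> S \<Longrightarrow> b \<in> S \<Longrightarrow> a + b \<in> S" "Gcd S = 1"
  obtains q where "q \<in> S" "Suc q \<in> S"
proof -
  define gap where "gap = (\<lambda>d. 0 < d \<and> (\<exists>q. q \<in> S \<and> q + d \<in> S))"
  have "\<not> S \<subseteq> {0}"
    using assms(3) Gcd_0_iff[of S] by auto
  then obtain a where "a \<in> S" "a \<noteq> 0"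
    by blast
  then have "gap a"
    using assms(1) by (auto simp: gap_def intro!: exI[of _ 0])
  define d where "d = (LEAST d. gap d)"
  have "gap d"
    unfolding d_def using \<open>gap a\<close> by (rule LeastI)
  then obtain q where "0 < d" "q \<in> S" "q + d \<in> S"
    by (auto simp: gap_def)
  have "d dvd a" if "a \<in> S" for a
  proof -
    obtain x y where xy: "d * x = a * y + gcd d a"
      using bezout_nat[of d a] \<open>0 < d\<close> by auto
    have "x * q + y * a \<in> S"
      using \<open>q \<in> S\<close> \<open>a \<in> S\<close> by (intro assms(2) mult_mem_additive_set[OF assms(1,2)])
    moreover have "x * (q + d) \<in> S"
      by (rule mult_mem_additive_set[OF assms(1,2) \<open>q + d \<in> S\<close>])
    moreover have "x * (q + d) = (x * q + y * a) + gcd d a"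
      using xy by (simp add: algebra_simps)
    moreover have "0 < gcd d a"
      using \<open>0 < d\<close> by simp
    ultimately have "gap (gcd d a)"
      unfolding gap_def by auto
    then have "d \<le> gcd d a"
      unfolding d_def by (rule Least_le)
    then have "gcd d a = d"
      using gcd_le1_nat[of d a] \<open>0 < d\<close> by linarith
    then show ?thesis
      using gcd_dvd2[of d a] by simp
  qed
  then have "d dvd Gcd S"
    by (rule Gcd_greatest)
  then have "d = 1"
    using assms(3) by simp
  with \<open>q \<in> S\<close> \<open>q + d \<in> S\<close> show ?thesis
    using that by simp
qed


lemma additive_set_ge_mem:
  fixes S :: "nat set"
  assumes "0 \<in> S" "\<And>a b. a \<in> S \<Longrightarrow> b \<in> S \<Longrightarrow> a + b \<in> S" "q \<in> S" "Suc q \<in> S" "q * q \<le> n"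
  shows "n \<in> S"
proof (cases "q = 0")
  case True
  then show ?thesis
    using mult_mem_additive_set[OF assms(1,2,4), of n] by simp
next
  case False
  define a where "a = n div q"
  define r where "r = n mod q"
  have "r < q"
    using False by (simp add: r_def)
  have "q \<le> a"
    using div_le_mono[OF assms(5), of q] False by (simp add: a_def)
  have "n = a * q + r"
    by (simp add: a_def r_def)
  also have "\<dots> = (a - r) * q + r * q + r"
    using \<open>r < q\<close> \<open>q \<le> a\<close> by (simp add: diff_mult_distrib)
  also have "\<dots> = (a - r) * q + r * Suc q"
    by simp
  also have "\<dots> \<in> S"
    by (intro assms(2) mult_mem_additive_set[OF assms(1,2)] assms(3,4))
  finally show ?thesis .
qed

lemma eventually_mem_additive_set:
  fixes A :: "nat set"
  assumes "\<And>a b. a \<in> A \<Longrightarrow> b \<in> A \<Longrightarrow> a + b \<in> A" "Gcd A = 1"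
  obtains N where "\<And>n. N \<le> n \<Longrightarrow> n \<in> insert 0 A"
proof -
  have add: "a + b \<in> insert 0 A" if "a \<in> insert 0 A" "b \<in> insert 0 A" for a b
    using that assms(1) by auto
  moreover have "Gcd (insert 0 A) = 1"
    using assms(2) by simp
  ultimately obtain q where "q \<in> insert 0 A" "Suc q \<in> insert 0 A"
    using additive_set_consecutive[of "insert 0 A"] by blast
  then show ?thesis
    using additive_set_ge_mem[of "insert 0 A" q, OF _ add] that by blast
qed

lemma ergodic_mpow_pos:
  assumes "ergodic P"
  obtains N where "\<And>x y. 0 < mpow P N x y"
proof -
  have st: "stochastic P" and irr: "irreducible P" and ap: "aperiodic P"
    using assms by (auto simp: ergodic_def)
  have "\<exists>N. \<forall>n\<ge>N. 0 < mpow P n x x" for x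
  proof -
    define A where "A = {n. 0 < n \<and> 0 < mpow P n x x}"
    have add: "a + b \<in> A" if "a \<in> A" "b \<in> A" for a b
    proof -
      have "0 < mpow P a x x * mpow P b x x"
        using that by (simp add: A_def)
      also have "\<dots> \<le> mpow P (a + b) x x"
        by (rule mpow_add_ge[OF st])
      finally show ?thesis
        using that by (simp add: A_def)
    qed
    have "Gcd A = 1"
      using ap by (simp add: A_def aperiodic_def)
    then obtain N where "\<And>n. N \<le> n \<Longrightarrow> n \<in> insert 0 A"
      using eventually_mem_additive_set[OF add] by blast
    then have "0 < mpow P n x x" if "max N 1 \<le> n" for n
      using that by (fastforce simp: A_def)
    then show ?thesis
      by blast
  qed
  then obtain N where N: "\<And>x n. N x \<le> n \<Longrightarrow> 0 < mpow P n x x"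
    by metis
  obtain m where m: "\<And>x y. 0 < mpow P (m x y) x y"
    using irr unfolding irreducible_def by metis
  define N\<^sub>0 where "N\<^sub>0 = Max (range N)"
  define M where "M = Max (range (case_prod m))"
  have "0 < mpow P (N\<^sub>0 + M) x y" for x y
  proof -
    have "m x y \<le> M" "N x \<le> N\<^sub>0"
      unfolding M_def N\<^sub>0_def by (auto intro!: Max_ge image_eqI[of _ _ "(x, y)"])
    then have "0 < mpow P (N\<^sub>0 + M - m x y) x x * mpow P (m x y) x y"
      using N m by simp
    also have "\<dots> \<le> mpow P (N\<^sub>0 + M) x y"
      using mpow_add_ge[OF st, of "N\<^sub>0 + M - m x y" x x "m x y" y] \<open>m x y \<le> M\<close> by simp
    finally show ?thesis .
  qed
  then show ?thesis
    using that by blast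
qed

lemma l1_contraction:
  fixes \<nu> :: "'a::finite \<Rightarrow> real"
  assumes "stochastic K" "(\<Sum>z\<in>UNIV. \<nu> z) = 0" "\<And>z y. \<beta> y \<le> K z y"
  shows "(\<Sum>y\<in>UNIV. \<bar>\<Sum>z\<in>UNIV. \<nu> z * K z y\<bar>) \<le> (1 - (\<Sum>y\<in>UNIV. \<beta> y)) * (\<Sum>z\<in>UNIV. \<bar>\<nu> z\<bar>)"
proof -
  have shift: "(\<Sum>z\<in>UNIV. \<nu> z * K z y) = (\<Sum>z\<in>UNIV. \<nu> z * (K z y - \<beta> y))" for y
    using assms(2) by (simp add: right_diff_distrib sum_subtractf flip: sum_distrib_right)
  have "(\<Sum>y\<in>UNIV. \<bar>\<Sum>z\<in>UNIV. \<nu> z * K z y\<bar>) \<le> (\<Sum>y\<in>UNIV. \<Sum>z\<in>UNIV. \<bar>\<nu> z\<bar> * (K z y - \<beta> y))"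
    unfolding shift using assms(3) by (intro sum_mono order_trans[OF sum_abs]) (simp add: abs_mult)
  also have "\<dots> = (\<Sum>z\<in>UNIV. \<bar>\<nu> z\<bar> * (\<Sum>y\<in>UNIV. K z y - \<beta> y))"
    by (subst sum.swap) (simp add: sum_distrib_left)
  also have "\<dots> = (1 - (\<Sum>y\<in>UNIV. \<beta> y)) * (\<Sum>z\<in>UNIV. \<bar>\<nu> z\<bar>)"
    using assms(1) by (simp add: stochastic_def sum_subtractf sum_distrib_left mult.commute)
  finally show ?thesis .
qed

lemma l1_dist_mpow_add_le:
  assumes "stochastic P" "stationary P \<pi>" "\<And>z y. \<beta> y \<le> mpow P n z y"
  shows "(\<Sum>y\<in>UNIV. \<bar>mpow P (t + n) x y - \<pi> y\<bar>) \<le>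
           (1 - (\<Sum>y\<in>UNIV. \<beta> y)) * (\<Sum>y\<in>UNIV. \<bar>mpow P t x y - \<pi> y\<bar>)"
proof -
  have "mpow P (t + n) x y - \<pi> y = (\<Sum>z\<in>UNIV. (mpow P t x z - \<pi> z) * mpow P n z y)" for y
    using stationary_mpow[OF assms(2), of n y]
    by (simp add: mpow_add mmult_def left_diff_distrib sum_subtractf)
  moreover have "(\<Sum>z\<in>UNIV. mpow P t x z - \<pi> z) = 0"
    using assms(2) by (simp add: sum_subtractf mpow_row_sum[OF assms(1)] stationary_def)
  ultimately show ?thesis
    using l1_contraction[OF stochastic_mpow[OF assms(1)] _ assms(3)] by simp
qed

lemma ergodic_minorization:
  assumes "ergodic P"
  shows "\<exists>\<beta> N. (\<forall>z y. \<beta> y \<le> mpow P N z y) \<and> 0 < (\<Sum>y\<in>UNIV. \<beta> y)"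
proof -
  obtain N where N: "\<And>x y. 0 < mpow P N x y"
    using ergodic_mpow_pos[OF assms] by blast
  define \<beta> where "\<beta> y = Min (range (\<lambda>z. mpow P N z y))" for y
  have "\<beta> y \<le> mpow P N z y" for z y
    unfolding \<beta>_def by (rule Min_le) auto
  moreover have "0 < (\<Sum>y\<in>UNIV. \<beta> y)"
    unfolding \<beta>_def using N by (intro sum_pos) (auto simp: Min_gr_iff)
  ultimately show ?thesis
    by blast
qed

lemma l1_dist_mpow_antimono:
  assumes "stochastic P" "stationary P \<pi>" "t \<le> t'"
  shows "(\<Sum>y\<in>UNIV. \<bar>mpow P t' x y - \<pi> y\<bar>) \<le> (\<Sum>y\<in>UNIV. \<bar>mpow P t x y - \<pi> y\<bar>)"
  using assms(3)
proof (induction t' rule: dec_induct)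
  case (step m)
  have "(\<Sum>y\<in>UNIV. \<bar>mpow P (m + 1) x y - \<pi> y\<bar>) \<le> (\<Sum>y\<in>UNIV. \<bar>mpow P m x y - \<pi> y\<bar>)"
    using l1_dist_mpow_add_le[OF assms(1,2), where \<beta>="\<lambda>_. 0" and t=m and n=1] assms(1)
    by (simp add: stochastic_def)
  with step show ?case
    by simp
qed simp

lemma mpow_eventually_close:
  assumes "ergodic P" "stationary P \<pi>" "0 < \<delta>"
  shows "\<exists>T>0. \<forall>t\<ge>T. var_dist (mpow P t x) \<pi> \<le> \<delta>"
proof -
  have st: "stochastic P"
    using assms(1) by (simp add: ergodic_def)
  define l where "l t = (\<Sum>y\<in>UNIV. \<bar>mpow P t x y - \<pi> y\<bar>)" for t
  obtain \<beta> N where \<beta>_le: "\<And>z y. \<beta> y \<le> mpow P N z y" and "0 < (\<Sum>y\<in>UNIV. \<beta> y)"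
    using ergodic_minorization[OF assms(1)] by blast
  define \<theta> where "\<theta> = (\<Sum>y\<in>UNIV. \<beta> y)"
  have "\<theta> \<le> (\<Sum>y\<in>UNIV. mpow P N x y)"
    unfolding \<theta>_def by (intro sum_mono \<beta>_le)
  then have "\<theta> \<le> 1"
    by (simp add: mpow_row_sum[OF st])
  have l_bound: "l (k * N) \<le> (1 - \<theta>) ^ k * 2" for k
  proof (induction k)
    case 0
    have "l 0 \<le> (\<Sum>y\<in>UNIV. mone x y + \<pi> y)"
      unfolding l_def using assms(2)
      by (intro sum_mono) (auto simp: mone_def stationary_def abs_le_iff)
    then show ?case
      using assms(2) by (simp add: sum.distrib mone_def stationary_def)
  next
    case (Suc k)
    have "l (k * N + N) \<le> (1 - \<theta>) * l (k * N)"
      unfolding l_def \<theta>_def using \<beta>_le by (rule l1_dist_mpow_add_le[OF st assms(2)])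
    also have "\<dots> \<le> (1 - \<theta>) * ((1 - \<theta>) ^ k * 2)"
      using Suc \<open>\<theta> \<le> 1\<close> by (intro mult_left_mono) auto
    finally show ?case
      by (simp add: add.commute)
  qed
  obtain k where k: "(1 - \<theta>) ^ k < \<delta>"
    using real_arch_pow_inv[of \<delta> "1 - \<theta>"] assms(3) \<open>0 < (\<Sum>y\<in>UNIV. \<beta> y)\<close> by (auto simp: \<theta>_def)
  have "var_dist (mpow P t x) \<pi> \<le> \<delta>" if "max 1 (k * N) \<le> t" for t
  proof -
    have "l t \<le> 2 * \<delta>"
      using l1_dist_mpow_antimono[OF st assms(2), of "k * N" t x] l_bound[of k] k that
      by (simp add: l_def)
    then show ?thesis
      by (simp add: var_dist_def l_def)
  qed
  then show ?thesis
    by (intro exI[of _ "max 1 (k * N)"]) auto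
qed

lemma heat_kernel_close_above_cmix_time:
  assumes "\<And>y. \<exists>T>0. \<forall>t\<ge>T. var_dist (heat_kernel P t y) \<pi> \<le> \<delta>" "cmix_time P \<pi> \<delta> < T"
  shows "var_dist (heat_kernel P T y) \<pi> \<le> \<delta>"
proof -
  define Y where "Y = {t. 0 < t \<and> (\<forall>t'\<ge>t. var_dist (heat_kernel P t' y) \<pi> \<le> \<delta>)}"
  have "Y \<noteq> {}"
    using assms(1)[of y] by (auto simp: Y_def)
  moreover have "bdd_below Y"
    by (auto simp: Y_def intro: bdd_belowI[of _ 0])
  moreover have "Inf Y < T"
    using assms(2) Max_ge[of "range (cmix_time_from P \<pi> \<delta>)" "cmix_time_from P \<pi> \<delta> y"]
    by (simp add: cmix_time_def cmix_time_from_def Y_def)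
  ultimately obtain s where "s \<in> Y" "s < T"
    by (auto simp: cInf_less_iff)
  then show ?thesis
    by (simp add: Y_def)
qed

lemma cmix_time_nonneg:
  assumes "\<And>y. \<exists>T>0. \<forall>t\<ge>T. var_dist (heat_kernel P t y) \<pi> \<le> \<delta>"
  shows "0 \<le> cmix_time P \<pi> \<delta>"
proof -
  obtain x :: 'a where True
    by simp
  have "0 \<le> cmix_time_from P \<pi> \<delta> x"
    unfolding cmix_time_from_def using assms[of x] by (intro cInf_greatest) auto
  also have "\<dots> \<le> cmix_time P \<pi> \<delta>"
    unfolding cmix_time_def by (intro Max_ge) auto
  finally show ?thesis .
qed

lemma mix_time_close:
  assumes "\<And>y. \<exists>T>0. \<forall>t\<ge>T. var_dist (mpow P t y) \<pi> \<le> \<delta>"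
  shows "0 < mix_time P \<pi> \<delta>" "var_dist (mpow P (mix_time P \<pi> \<delta>) y) \<pi> \<le> \<delta>"
proof -
  have "\<exists>t. 0 < t \<and> (\<forall>t'\<ge>t. var_dist (mpow P t' y) \<pi> \<le> \<delta>)"
    using assms[of y] by blast
  then have "0 < mix_time_from P \<pi> \<delta> y \<and> (\<forall>t\<ge>mix_time_from P \<pi> \<delta> y. var_dist (mpow P t y) \<pi> \<le> \<delta>)"
    unfolding mix_time_from_def by (rule LeastI_ex)
  moreover have "mix_time_from P \<pi> \<delta> y \<le> mix_time P \<pi> \<delta>"
    unfolding mix_time_def by (rule Max_ge) simp_all
  ultimately show "0 < mix_time P \<pi> \<delta>" "var_dist (mpow P (mix_time P \<pi> \<delta>) y) \<pi> \<le> \<delta>"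
    by simp_all
qed

lemma congestion_nonneg:
  assumes "stochastic P" "\<And>y. 0 < \<pi> y" "is_flow P P' \<pi> f"
  shows "0 \<le> congestion P P' \<pi> f"
proof -
  obtain z :: 'a where True
    by simp
  have "edges P \<noteq> {}"
  proof
    assume "edges P = {}"
    then have "(\<Sum>w\<in>UNIV. P z w) \<le> 0"
      by (intro sum_nonpos) (auto simp: edges_def not_less)
    with assms(1) show False
      by (simp add: stochastic_def)
  qed
  then obtain z w where zw: "(z, w) \<in> edges P"
    by auto
  have "0 \<le> congestion_edge P P' \<pi> f z w"
    unfolding congestion_edge_def using zw assms(2)[of z] assms(3)
    by (intro mult_nonneg_nonneg sum_nonneg) (auto simp: edges_def is_flow_def less_imp_le)
  also have "\<dots> \<le> congestion P P' \<pi> f"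
    unfolding congestion_def using zw by (intro Max_ge) force+
  finally show ?thesis .
qed

lemma poincare_of_flow:
  assumes "stochastic P" "stationary P \<pi>" "\<And>y. 0 < \<pi> y"
    and "stochastic P'" "stationary P' \<pi>" "is_flow P P' \<pi> f"
    and "conductance_ge P' \<pi> \<Phi>" "0 < \<Phi>" "0 \<le> c" "c * (8 * congestion P P' \<pi> f / \<Phi>\<^sup>2) \<le> 1"
  shows "poincare P \<pi> c"
  unfolding poincare_def
proof
  fix g
  define K where "K = 8 * congestion P P' \<pi> f / \<Phi>\<^sup>2"
  have "\<Phi>\<^sup>2 / 8 * variance \<pi> g \<le> dirichlet_form P' \<pi> g"
    using poincare_of_conductance_ge[OF assms(4,5,7)] assms(8) by (simp add: poincare_def)
  also have "\<dots> \<le> congestion P P' \<pi> f * dirichlet_form P \<pi> g"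
    by (rule dirichlet_form_le_congestion[OF assms(1,4,3,6)])
  finally have "variance \<pi> g \<le> K * dirichlet_form P \<pi> g"
    using assms(8) by (simp add: K_def field_simps)
  then have "c * variance \<pi> g \<le> (c * K) * dirichlet_form P \<pi> g"
    using assms(9) by (simp add: mult_left_mono mult.assoc)
  also have "\<dots> \<le> dirichlet_form P \<pi> g"
    using assms(9,10) congestion_nonneg[OF assms(1,3,6)]
    by (intro mult_left_le_one_le dirichlet_form_nonneg[OF assms(1,2)]) (simp_all add: K_def)
  finally show "c * variance \<pi> g \<le> dirichlet_form P \<pi> g" .
qed

text \<open>The degenerate case of congestion \<open>0\<close> forces a single state; then every constant is a
  Poincare constant and the mixing time is \<open>0\<close>.\<close>

lemma cmix_time_from_le_of_conductance:
  assumes "stochastic P" "stationary P \<pi>" "\<And>y. 0 < \<pi> y"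
    and "stochastic P'" "stationary P' \<pi>" "is_flow P P' \<pi> f"
    and "conductance_ge P' \<pi> \<Phi>" "0 < \<Phi>" "0 < \<epsilon>" "\<epsilon> \<le> 1"
  shows "cmix_time_from P \<pi> \<epsilon> x \<le> 4 * congestion P P' \<pi> f / \<Phi>\<^sup>2 * ln (1 / (\<epsilon>\<^sup>2 * \<pi> x))"
proof -
  define K where "K = 8 * congestion P P' \<pi> f / \<Phi>\<^sup>2"
  define L where "L = ln (1 / (\<epsilon>\<^sup>2 * \<pi> x))"
  have "0 \<le> K"
    using congestion_nonneg[OF assms(1,3,6)] by (simp add: K_def)
  have bound: "cmix_time_from P \<pi> \<epsilon> x \<le> L / (2 * c)" if "0 < c" "c * K \<le> 1" for c
    unfolding L_def using that poincare_of_flow[OF assms(1-8), of c]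
    by (intro cmix_time_from_le_of_poincare[OF assms(1-3) _ _ assms(9,10)]) (simp_all add: K_def)
  show ?thesis
  proof (cases "K = 0")
    case True
    have "0 \<le> L"
      using stationary_le_one[OF assms(2), of x] assms(3)[of x] assms(9,10)
      by (simp add: L_def mult_le_one power_le_one)
    have "cmix_time_from P \<pi> \<epsilon> x \<le> 0 + e" if "0 < e" for e
    proof -
      have "cmix_time_from P \<pi> \<epsilon> x \<le> L / (2 * ((L + 1) / e))"
        using that \<open>0 \<le> L\<close> True by (intro bound) simp_all
      also have "\<dots> \<le> 0 + e"
        using that \<open>0 \<le> L\<close> by (simp add: field_simps)
      finally show ?thesis .
    qed
    then have "cmix_time_from P \<pi> \<epsilon> x \<le> 0"
      by (rule field_le_epsilon)
    with True assms(8) show ?thesis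
      by (simp add: K_def)
  next
    case False
    then have "cmix_time_from P \<pi> \<epsilon> x \<le> L / (2 * (1 / K))"
      using \<open>0 \<le> K\<close> by (intro bound) simp_all
    then show ?thesis
      by (simp add: K_def L_def field_simps)
  qed
qed

lemma cmix_time_from_le_cmix_time:
  assumes "stochastic P" "stationary P \<pi>" "\<And>y. 0 < \<pi> y"
    and "irreducible P'" "stochastic P'" "stationary P' \<pi>" "is_flow P P' \<pi> f"
    and "0 < \<delta>" "\<delta> < 1/2" "0 < \<epsilon>" "\<epsilon> \<le> 1"
  shows "cmix_time_from P \<pi> \<epsilon> x \<le>
           4 * congestion P P' \<pi> f * (cmix_time P' \<pi> \<delta>)\<^sup>2 / (1/2 - \<delta>)\<^sup>2 * ln (1 / (\<epsilon>\<^sup>2 * \<pi> x))"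
    (is "_ \<le> ?bound (cmix_time P' \<pi> \<delta>)")
proof (rule tendsto_lowerbound)
  have close: "\<exists>T>0. \<forall>t\<ge>T. var_dist (heat_kernel P' t y) \<pi> \<le> \<delta>" for y
    by (rule heat_kernel_eventually_close[OF assms(4-6,8)])
  have below: "cmix_time_from P \<pi> \<epsilon> x \<le> ?bound T" if "cmix_time P' \<pi> \<delta> < T" for T
  proof -
    have "0 < T"
      using cmix_time_nonneg[OF close] that by linarith
    have "conductance_ge P' \<pi> ((1/2 - \<delta>) / T)"
      by (rule conductance_ge_of_mixing[OF assms(6) \<open>0 < T\<close> heat_kernel_row_sum[OF assms(5)]
            heat_kernel_close_above_cmix_time[OF close that] heat_kernel_escape_le[OF assms(5,6)]])
        (use \<open>0 < T\<close> in simp)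
    then have "cmix_time_from P \<pi> \<epsilon> x \<le>
        4 * congestion P P' \<pi> f / ((1/2 - \<delta>) / T)\<^sup>2 * ln (1 / (\<epsilon>\<^sup>2 * \<pi> x))"
      by (rule cmix_time_from_le_of_conductance[OF assms(1-3,5-7) _ _ assms(10,11)])
        (use assms(9) \<open>0 < T\<close> in simp)
    then show ?thesis
      by (simp add: power_divide)
  qed
  show "\<forall>\<^sub>F T in at_right (cmix_time P' \<pi> \<delta>). cmix_time_from P \<pi> \<epsilon> x \<le> ?bound T"
    using eventually_at_right_less by (rule eventually_mono) (rule below)
  show "(?bound \<longlongrightarrow> ?bound (cmix_time P' \<pi> \<delta>)) (at_right (cmix_time P' \<pi> \<delta>))"
    using assms(9) by (intro tendsto_intros) simp
qed simp

lemma cmix_time_from_le_mix_time: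
  assumes "stochastic P" "stationary P \<pi>" "\<And>y. 0 < \<pi> y"
    and "ergodic P'" "stationary P' \<pi>" "is_flow P P' \<pi> f"
    and "0 < \<delta>" "\<delta> < 1/2" "0 < \<epsilon>" "\<epsilon> \<le> 1"
  shows "cmix_time_from P \<pi> \<epsilon> x \<le>
           4 * congestion P P' \<pi> f * (real (mix_time P' \<pi> \<delta>))\<^sup>2 / (1/2 - \<delta>)\<^sup>2 * ln (1 / (\<epsilon>\<^sup>2 * \<pi> x))"
proof -
  have st': "stochastic P'"
    using assms(4) by (simp add: ergodic_def)
  have close: "\<exists>T>0. \<forall>t\<ge>T. var_dist (mpow P' t y) \<pi> \<le> \<delta>" for y
    by (rule mpow_eventually_close[OF assms(4,5,7)])
  have "conductance_ge P' \<pi> ((1/2 - \<delta>) / real (mix_time P' \<pi> \<delta>))"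
    using mix_time_close[OF close]
    by (intro conductance_ge_of_mixing[OF assms(5) _ mpow_row_sum[OF st'] _ mpow_escape_le[OF st' assms(5)]])
      simp_all
  then have "cmix_time_from P \<pi> \<epsilon> x \<le>
      4 * congestion P P' \<pi> f / ((1/2 - \<delta>) / real (mix_time P' \<pi> \<delta>))\<^sup>2 * ln (1 / (\<epsilon>\<^sup>2 * \<pi> x))"
    by (rule cmix_time_from_le_of_conductance[OF assms(1-3) st' assms(5,6) _ _ assms(9,10)])
      (use assms(8) mix_time_close(1)[OF close] in simp)
  then show ?thesis
    by (simp add: power_divide)
qed

theorem theorem24:
  fixes P P' :: "('a::finite) mat" and \<pi> :: "'a \<Rightarrow> real"
    and f :: "'a list \<Rightarrow> real" and \<epsilon> :: real and x :: 'a
  assumes "ergodic P" and "stationary P \<pi>"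
    and "ergodic P'" and "stationary P' \<pi>"
    and "is_flow P P' \<pi> f"
    and "0 < \<epsilon>" and "\<epsilon> \<le> 1"
  shows "cmix_time_from P \<pi> \<epsilon> x \<le>
           4 * congestion P P' \<pi> f * (cmix_time P' \<pi> (1 / (2 * exp 1)))\<^sup>2
             / (1/2 - 1 / (2 * exp 1))\<^sup>2 * ln (1 / (\<epsilon>\<^sup>2 * \<pi> x))
       \<and> cmix_time_from P \<pi> \<epsilon> x \<le>
           4 * congestion P P' \<pi> f * (real (mix_time P' \<pi> (1 / (2 * exp 1))))\<^sup>2
             / (1/2 - 1 / (2 * exp 1))\<^sup>2 * ln (1 / (\<epsilon>\<^sup>2 * \<pi> x))"
proof -
  have st: "stochastic P" and irr: "irreducible P" and st': "stochastic P'" and irr': "irreducible P'"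
    using assms(1,3) by (auto simp: ergodic_def)
  have pos: "0 < \<pi> y" for y
    by (rule stationary_pos[OF irr st assms(2)])
  have "1 / (2 * exp 1) < (1/2 :: real)"
    using one_less_exp_iff[of 1] by (simp add: field_simps)
  then show ?thesis
    using cmix_time_from_le_cmix_time[OF st assms(2) pos irr' st' assms(4,5) _ _ assms(6,7)]
      cmix_time_from_le_mix_time[OF st assms(2) pos assms(3,4,5) _ _ assms(6,7)]
    by simp
qed

end
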